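(* Fix $\mu\in(-1,1)$, let $m>0$ and $\kappa>0$ small, let $\xi\in\mathcal A_{\rho_\varepsilon}$ (i.e. $u^\xi\in\mathcal M_\mu$), and let $v$ (sufficiently regular) satisfy $\langle v,u^\xi_i\rangle=0$ for $i=1,\dots,N$, $\|v\|<\varepsilon^{3/2+m}$ and $\|v\|_{L^4}<\varepsilon^{3/4+m/2-\kappa}$. Then for each $i=1,\dots,N$, $$\langle u^\xi_i,\mathcal L(u^\xi+v)\rangle\le C\varepsilon^{2+2m-2\kappa},$$ with $C$ independent of $\varepsilon,\xi,v$.
   Context: $0<\varepsilon\ll1$; $f(u)=u^3-u$; $\langle\cdot,\cdot\rangle$, $\|\cdot\|$ inner product and norm of $L^2(0,1)$. $U(x)=\tanh(x/\sqrt2)$; $U(x;\xi,\pm1)=\pm U((x-\xi)/\varepsilon)$. Fix an integer $N\ge1$, small $\kappa_0>0$, $\rho_\varepsilon=\varepsilon^{\kappa_0}$. $\Omega_{\rho_\varepsilon}=\{h\in\mathbb R^{N+1}:0<h_1<\dots<h_{N+1}<1,\ \min_{j=0,\dots,N+1}|h_{j+1}-h_j|>\varepsilon/\rho_\varepsilon\}$ with $h_0=-h_1$, $h_{N+2}=2-h_{N+1}$. For $h\in\Omega_{\rho_\varepsilon}$, $u^h=\sum_{j=1}^{N+1}U(\cdot;h_j,(-1)^{j+1})+\beta_N$, where $\beta_N=\frac{(-1)^N-1}{2}+\mathcal O(\exp)$ (also for derivatives; exponentially small in $\varepsilon$) makes $u^h(0)=-1$ and $u^h$ satisfy Neumann boundary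 conditions. $\mathcal M=\{u^h:h\in\Omega_{\rho_\varepsilon}\}$, $\mathcal M_\mu=\{u^h\in\mathcal M:\int_0^1u^h=\mu\}$. There is a smooth map $h_{N+1}:[0,1]^N\to\mathbb R$ such that $u^h\in\mathcal M_\mu$ iff $h=(\xi,h_{N+1}(\xi))\in\Omega_{\rho_\varepsilon}$, $\xi=(h_1,\dots,h_N)$; $\mathcal A_{\rho_\varepsilon}=\{(\xi,h_{N+1}(\xi))\in\Omega_{\rho_\varepsilon}:\xi\in[0,1]^N\}$, and for such $\xi$, $u^\xi=u^{(\xi,h_{N+1}(\xi))}$, $u^\xi_i=\partial_{\xi_i}u^\xi$. $\mathcal L(\psi)=\varepsilon^2\psi_{xx}-f(\psi)$. *)

theory Defs
  imports "HOL-Analysis.Analysis"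
begin

definition fAC :: "real \<Rightarrow> real" where
  "fAC u = u ^ 3 - u"

definition Uw :: "real \<Rightarrow> real" where
  "Uw x = tanh (x / sqrt 2)"

text \<open>Sum of the N+1 alternating layers sum_{j=1}^{N+1} U(x; h_j, (-1)^(j+1)).
  Layer positions h are indexed by 1..N+1 (other values of h are irrelevant).\<close>
definition layers :: "real \<Rightarrow> nat \<Rightarrow> (nat \<Rightarrow> real) \<Rightarrow> real \<Rightarrow> real" where
  "layers \<epsilon> N h x = (\<Sum>j=1..N+1. (-1) ^ (j+1) * Uw ((x - h j) / \<epsilon>))"

text \<open>Correction beta_N (a function of x, exponentially small up to the constant
  ((-1)^N - 1)/2, also in derivatives), chosen so that u^h(0) = -1 and
  u^h satisfies homogeneous Neumann boundary conditions at 0 and 1.\<close>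
definition betaN :: "real \<Rightarrow> nat \<Rightarrow> (nat \<Rightarrow> real) \<Rightarrow> real \<Rightarrow> real" where
  "betaN \<epsilon> N h x =
     (let a = deriv (layers \<epsilon> N h) 0; b = deriv (layers \<epsilon> N h) 1
      in - 1 - layers \<epsilon> N h 0 - a * x + (a - b) * x ^ 2 / 2)"

definition uh :: "real \<Rightarrow> nat \<Rightarrow> (nat \<Rightarrow> real) \<Rightarrow> real \<Rightarrow> real" where
  "uh \<epsilon> N h x = layers \<epsilon> N h x + betaN \<epsilon> N h x"

definition hext :: "nat \<Rightarrow> (nat \<Rightarrow> real) \<Rightarrow> nat \<Rightarrow> real" where
  "hext N h j = (if j = 0 then - h 1 else if j = N + 2 then 2 - h (N+1) else h j)"

definition Omega :: "real \<Rightarrow> real \<Rightarrow> nat \<Rightarrow> (nat \<Rightarrow> real) set" where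
  "Omega \<epsilon> \<rho> N = {h. 0 < h 1 \<and> (\<forall>j\<in>{1..N}. h j < h (j+1)) \<and> h (N+1) < 1 \<and>
       (\<forall>j\<in>{0..N+1}. \<bar>hext N h (j+1) - hext N h j\<bar> > \<epsilon> / \<rho>)}"

definition hcomb :: "nat \<Rightarrow> (nat \<Rightarrow> real) \<Rightarrow> real \<Rightarrow> nat \<Rightarrow> real" where
  "hcomb N \<xi> t = \<xi>(N+1 := t)"

definition mass :: "real \<Rightarrow> nat \<Rightarrow> (nat \<Rightarrow> real) \<Rightarrow> real" where
  "mass \<epsilon> N h = integral {0..1} (uh \<epsilon> N h)"

text \<open>u^xi = u^{(xi, H xi)} where H plays the role of the map h_{N+1}.\<close>
definition uxi :: "real \<Rightarrow> nat \<Rightarrow> ((nat \<Rightarrow> real) \<Rightarrow> real) \<Rightarrow> (nat \<Rightarrow> real) \<Rightarrow> real \<Rightarrow> real" where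
  "uxi \<epsilon> N H \<xi> = uh \<epsilon> N (hcomb N \<xi> (H \<xi>))"

definition uxi_i :: "real \<Rightarrow> nat \<Rightarrow> ((nat \<Rightarrow> real) \<Rightarrow> real) \<Rightarrow> (nat \<Rightarrow> real) \<Rightarrow> nat \<Rightarrow> real \<Rightarrow> real" where
  "uxi_i \<epsilon> N H \<xi> i x = deriv (\<lambda>s. uxi \<epsilon> N H (\<xi>(i := \<xi> i + s)) x) 0"

text \<open>H is (locally along each coordinate direction at xi) the map h_{N+1}:
  it is differentiable and keeps the mass equal to mu.\<close>
definition mass_map_at :: "real \<Rightarrow> nat \<Rightarrow> real \<Rightarrow> ((nat \<Rightarrow> real) \<Rightarrow> real) \<Rightarrow> (nat \<Rightarrow> real) \<Rightarrow> bool" where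
  "mass_map_at \<epsilon> N \<mu> H \<xi> \<longleftrightarrow>
     (\<forall>i\<in>{1..N}. (\<lambda>s. H (\<xi>(i := \<xi> i + s))) differentiable (at 0) \<and>
        (\<forall>\<^sub>F s in nhds 0. mass \<epsilon> N (hcomb N (\<xi>(i := \<xi> i + s)) (H (\<xi>(i := \<xi> i + s)))) = \<mu>))"

definition ip :: "(real \<Rightarrow> real) \<Rightarrow> (real \<Rightarrow> real) \<Rightarrow> real" where
  "ip f g = integral {0..1} (\<lambda>x. f x * g x)"

definition L2norm :: "(real \<Rightarrow> real) \<Rightarrow> real" where
  "L2norm f = sqrt (integral {0..1} (\<lambda>x. (f x) ^ 2))"

definition L4norm :: "(real \<Rightarrow> real) \<Rightarrow> real" where
  "L4norm f = (integral {0..1} (\<lambda>x. (f x) ^ 4)) powr (1/4)"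

definition Lop :: "real \<Rightarrow> (real \<Rightarrow> real) \<Rightarrow> real \<Rightarrow> real" where
  "Lop \<epsilon> \<psi> x = \<epsilon>\<^sup>2 * deriv (deriv \<psi>) x - fAC (\<psi> x)"

definition regular_neumann :: "(real \<Rightarrow> real) \<Rightarrow> bool" where
  "regular_neumann v \<longleftrightarrow>
     (\<forall>x\<in>{0..1}. v differentiable (at x) \<and> deriv v differentiable (at x)) \<and>
     continuous_on {0..1} (deriv (deriv v)) \<and> deriv v 0 = 0 \<and> deriv v 1 = 0"

end

theory Submission
  imports Defs "HOL-Real_Asymp.Real_Asymp"
begin

text \<open>
  Write \<open>u\<^sup>\<xi> = -1 + \<Sum>j. (-1)^(j+1) \<phi>(h j, x)\<close>, where \<open>\<phi>(t, x)\<close> is the kink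
  \<open>U((x - t)/\<epsilon>)\<close> minus a quadratic that makes it vanish at 0 and satisfy Neumann conditions;
  \<open>\<beta>\<^sub>N\<close> is exactly the alternating sum of these quadratics. Then \<open>u\<^sup>\<xi>\<^sub>i\<close> is a combination
  of \<open>\<partial>\<^sub>t\<phi>(\<xi> i, x)\<close> and \<open>\<partial>\<^sub>t\<phi>(h (N+1), x)\<close>, and differentiating the mass constraint bounds
  the coefficient of the latter by 2: translating a layer changes its mass at rate about 2.

  On \<open>\<Omega>\<close> the layers are \<open>\<epsilon>^(1-\<kappa>0)\<close> apart, so at every point all kinks but the nearest
  are within \<open>\<delta> = 4 exp(-\<epsilon>^(-\<kappa>0)/2)\<close> of \<open>\<plusminus>1\<close>. Hence \<open>\<epsilon>^2 u'' - f(u) = O(\<delta>/\<epsilon>)\<close>; and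
  since \<open>\<partial>\<^sub>t\<phi>\<close> is, up to such errors, a translate of \<open>U'\<close>, which solves the linearised equation,
  \<open>\<epsilon>^2 u\<^sub>i'' - f'(u) u\<^sub>i = O(\<delta>/\<epsilon>^2)\<close>, while \<open>|u\<^sub>i| \<le> 6/\<epsilon>\<close>. Expanding \<open>f(u + v)\<close> and
  moving \<open>\<epsilon>^2 \<partial>\<^sub>x\<^sub>x\<close> from \<open>v\<close> onto \<open>u\<^sub>i\<close> (both satisfy Neumann conditions) leaves
  exponentially small terms plus \<open>O(1/\<epsilon>) (\<integral>v^2 + \<integral>|v|^3)\<close>, and
  \<open>|v|^3 \<le> (t v^2 + v^4/t)/2\<close> with \<open>t = \<epsilon>^(-2\<kappa>)\<close> turns the norm bounds into
  \<open>O(\<epsilon>^(2+2m-2\<kappa>))\<close>.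
\<close>

section \<open>The kink profile\<close>

definition Uw_tail :: "real \<Rightarrow> real" where
  "Uw_tail y = 1 - (Uw y)\<^sup>2"

definition Uw' :: "real \<Rightarrow> real" where
  "Uw' y = Uw_tail y / sqrt 2"

definition fAC' :: "real \<Rightarrow> real" where
  "fAC' u = 3 * u\<^sup>2 - 1"

definition Uw_primitive :: "real \<Rightarrow> real" where
  "Uw_primitive y = sqrt 2 * ln (cosh (y / sqrt 2))"

lemma DERIV_Uw [derivative_intros]:
  assumes "(g has_real_derivative D) (at x within S)"
  shows "((\<lambda>x. Uw (g x)) has_real_derivative Uw' (g x) * D) (at x within S)"
proof -
  have "sqrt 2 * sqrt 2 = (2::real)"
    by simp
  then show ?thesis
    unfolding Uw_def[abs_def] Uw'_def Uw_tail_def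
    by (auto intro!: derivative_eq_intros assms simp: field_simps)
qed

lemma DERIV_Uw' [derivative_intros]:
  assumes "(g has_real_derivative D) (at x within S)"
  shows "((\<lambda>x. Uw' (g x)) has_real_derivative fAC (Uw (g x)) * D) (at x within S)"
proof -
  have "sqrt 2 * sqrt 2 = (2::real)"
    by simp
  then show ?thesis
    unfolding Uw'_def[abs_def] Uw_tail_def
    by (auto intro!: derivative_eq_intros assms
        simp: fAC_def Uw'_def Uw_tail_def field_simps power2_eq_square power3_eq_cube)
qed

lemma DERIV_fAC_Uw [derivative_intros]:
  assumes "(g has_real_derivative D) (at x within S)"
  shows "((\<lambda>x. fAC (Uw (g x))) has_real_derivative fAC' (Uw (g x)) * Uw' (g x) * D) (at x within S)"
  unfolding fAC_def fAC'_def
  by (auto intro!: derivative_eq_intros assms simp: algebra_simps power2_eq_square)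

lemma DERIV_Uw_primitive [derivative_intros]:
  assumes "(g has_real_derivative D) (at x within S)"
  shows "((\<lambda>x. Uw_primitive (g x)) has_real_derivative Uw (g x) * D) (at x within S)"
  unfolding Uw_primitive_def[abs_def] Uw_def tanh_def
  by (auto intro!: derivative_eq_intros assms simp: field_simps)

lemma continuous_on_Uw [continuous_intros]:
  "continuous_on S g \<Longrightarrow> continuous_on S (\<lambda>x. Uw (g x))"
  unfolding Uw_def by (intro continuous_intros) auto

lemma abs_Uw_less_1: "\<bar>Uw y\<bar> < 1"
  using tanh_real_bounds[of "y / sqrt 2"] by (auto simp: Uw_def)

lemma Uw_tail_pos: "0 < Uw_tail y"
  using abs_Uw_less_1[of y] by (simp add: Uw_tail_def abs_square_less_1)

lemma Uw_tail_le_1: "Uw_tail y \<le> 1"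
  by (simp add: Uw_tail_def)

lemma abs_Uw'_le_tail: "\<bar>Uw' y\<bar> \<le> Uw_tail y"
  using Uw_tail_pos[of y] by (simp add: Uw'_def abs_div divide_le_eq)

lemma abs_fAC_Uw_le_tail: "\<bar>fAC (Uw y)\<bar> \<le> Uw_tail y"
proof -
  have "fAC (Uw y) = - Uw y * Uw_tail y"
    by (simp add: fAC_def Uw_tail_def algebra_simps power2_eq_square power3_eq_cube)
  then show ?thesis
    using abs_Uw_less_1[of y] Uw_tail_pos[of y] by (simp add: abs_mult mult_left_le_one_le)
qed

lemma Uw_minus_sgn_le_tail:
  assumes "y \<noteq> 0"
  shows "\<bar>Uw y - sgn y\<bar> \<le> Uw_tail y"
proof -
  have "sgn (Uw y) = sgn y"
    by (simp add: Uw_def sgn_if zero_less_divide_iff divide_less_0_iff)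
  moreover have "Uw y * Uw y \<le> \<bar>Uw y\<bar>"
    using abs_Uw_less_1[of y] mult_left_le_one_le[of "\<bar>Uw y\<bar>" "\<bar>Uw y\<bar>"] by simp
  ultimately show ?thesis
    using assms abs_Uw_less_1[of y]
    by (cases "y > 0") (auto simp: Uw_tail_def sgn_if abs_if power2_eq_square split: if_splits)
qed

lemma Uw_tail_le_exp: "Uw_tail y \<le> 4 * exp (- \<bar>y\<bar>)"
proof -
  define z where "z = y / sqrt 2"
  have "Uw_tail y = ((cosh z)\<^sup>2 - (sinh z)\<^sup>2) / (cosh z)\<^sup>2"
    using cosh_real_pos[of z]
    by (simp add: Uw_tail_def Uw_def z_def[symmetric] tanh_def power_divide diff_divide_distrib)
  then have tail: "Uw_tail y = 1 / (cosh z)\<^sup>2"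
    using cosh_square_eq[of z] by simp
  have "exp \<bar>z\<bar> / 2 \<le> cosh z"
    by (cases "z \<ge> 0") (auto simp: cosh_def)
  then have "(exp \<bar>z\<bar> / 2)\<^sup>2 \<le> (cosh z)\<^sup>2"
    by (intro power_mono) auto
  then have "Uw_tail y \<le> 4 * exp (- 2 * \<bar>z\<bar>)"
    unfolding tail by (simp add: field_simps power2_eq_square exp_minus exp_add[symmetric])
  also have "\<dots> \<le> 4 * exp (- \<bar>y\<bar>)"
  proof -
    have "2 * \<bar>z\<bar> = \<bar>y\<bar> * (2 / sqrt 2)"
      by (simp add: z_def abs_div)
    also have "\<dots> = \<bar>y\<bar> * sqrt 2"
      by (simp add: real_div_sqrt)
    finally have "\<bar>y\<bar> \<le> 2 * \<bar>z\<bar>"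
      using mult_left_mono[of 1 "sqrt 2" "\<bar>y\<bar>"] by simp
    then show ?thesis
      by simp
  qed
  finally show ?thesis .
qed

lemma Uw_tail_le_of_abs_ge: "c \<le> \<bar>y\<bar> \<Longrightarrow> Uw_tail y \<le> 4 * exp (- c)"
  using Uw_tail_le_exp[of y] exp_le_cancel_iff[of "- \<bar>y\<bar>" "- c"] by linarith

lemma abs_mult_le_of_abs_le_1: "\<bar>x\<bar> \<le> 1 \<Longrightarrow> \<bar>a\<bar> \<le> d \<Longrightarrow> \<bar>x * a\<bar> \<le> (d::real)"
  by (metis abs_ge_zero abs_mult mult_left_le_one_le order_trans)

lemma fAC_lipschitz:
  assumes "\<bar>a\<bar> \<le> 1" "\<bar>b - a\<bar> \<le> 1"
  shows "\<bar>fAC b - fAC a\<bar> \<le> 8 * \<bar>b - a\<bar>"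
proof -
  define r where "r = b - a"
  have "\<bar>a * a\<bar> \<le> 1" "\<bar>a * r\<bar> \<le> 1" "\<bar>r * r\<bar> \<le> 1"
    by (rule abs_mult_le_of_abs_le_1; use assms in \<open>simp add: r_def\<close>)+
  then have "\<bar>3 * (a * a) + 3 * (a * r) + r * r - 1\<bar> \<le> 8"
    by linarith
  moreover have "fAC b - fAC a = r * (3 * (a * a) + 3 * (a * r) + r * r - 1)"
    by (simp add: r_def fAC_def algebra_simps power3_eq_cube)
  ultimately show ?thesis
    by (simp add: r_def abs_mult mult_left_mono mult.commute)
qed

lemma fAC'_lipschitz:
  assumes "\<bar>a\<bar> \<le> 1" "\<bar>b - a\<bar> \<le> 1"
  shows "\<bar>fAC' b - fAC' a\<bar> \<le> 9 * \<bar>b - a\<bar>"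
proof -
  have "fAC' b - fAC' a = (b - a) * (6 * a + 3 * (b - a))"
    by (simp add: fAC'_def algebra_simps power2_eq_square)
  moreover have "\<bar>6 * a + 3 * (b - a)\<bar> \<le> 9"
    using assms by (simp add: abs_le_iff)
  ultimately show ?thesis
    by (simp add: abs_mult mult_left_mono mult.commute)
qed

lemma abs_fAC'_le:
  assumes "\<bar>u\<bar> \<le> 2"
  shows "\<bar>fAC' u\<bar> \<le> 11"
proof -
  have "u\<^sup>2 \<le> 4"
    using assms abs_le_square_iff[of u 2] by simp
  then show ?thesis
    unfolding fAC'_def using zero_le_power2[of u] by arith
qed

lemma abs_sum_diff_le:
  fixes f g :: "'a \<Rightarrow> real"
  assumes "\<And>j. j \<in> A \<Longrightarrow> \<bar>f j - g j\<bar> \<le> d"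
  shows "\<bar>(\<Sum>j\<in>A. f j) - (\<Sum>j\<in>A. g j)\<bar> \<le> real (card A) * d"
proof -
  have "\<bar>(\<Sum>j\<in>A. f j) - (\<Sum>j\<in>A. g j)\<bar> \<le> (\<Sum>j\<in>A. \<bar>f j - g j\<bar>)"
    unfolding sum_subtractf[symmetric] by (rule sum_abs)
  also have "\<dots> \<le> real (card A) * d"
    using assms by (rule sum_bounded_above)
  finally show ?thesis .
qed

lemma abs_cube_le_mean:
  fixes v t :: real
  assumes "0 < t"
  shows "\<bar>v\<bar> ^ 3 \<le> (t * v\<^sup>2 + v ^ 4 / t) / 2"
proof -
  have "0 \<le> \<bar>v\<bar>\<^sup>2 * (t - \<bar>v\<bar>)\<^sup>2"
    by simp
  also have "\<dots> = t\<^sup>2 * v\<^sup>2 - 2 * t * \<bar>v\<bar> ^ 3 + v ^ 4"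
    by (simp add: power2_eq_square power3_eq_cube power4_eq_xxxx algebra_simps abs_mult_self_eq)
  finally show ?thesis
    using assms by (simp add: field_simps power2_eq_square)
qed

lemma integral_even_power_nonneg: "even n \<Longrightarrow> 0 \<le> integral S (\<lambda>x. (f x :: real) ^ n)"
  by (cases "(\<lambda>x. f x ^ n) integrable_on S")
    (auto intro: integral_nonneg simp: zero_le_even_power not_integrable_integral)

lemma powr_div_self: "0 < (e::real) \<Longrightarrow> e powr a / e = e powr (a - 1)"
  by (simp add: powr_diff powr_one)

section \<open>A single boundary-corrected layer\<close>

text \<open>The quadratic correction makes each layer vanish at 0 and have zero slope at 0 and 1;
  \<open>betaN\<close> is exactly the alternating sum of these corrections (\<open>uh_eq_layers\<close>).\<close>

definition layer :: "real \<Rightarrow> real \<Rightarrow> real \<Rightarrow> real" where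
  "layer e t x = Uw ((x - t) / e) - Uw (- t / e) - x * Uw' (- t / e) / e
     + x\<^sup>2 / 2 * (Uw' (- t / e) - Uw' ((1 - t) / e)) / e"

definition layer_x :: "real \<Rightarrow> real \<Rightarrow> real \<Rightarrow> real" where
  "layer_x e t x = (Uw' ((x - t) / e) - Uw' (- t / e) + x * (Uw' (- t / e) - Uw' ((1 - t) / e))) / e"

definition layer_xx :: "real \<Rightarrow> real \<Rightarrow> real \<Rightarrow> real" where
  "layer_xx e t x = fAC (Uw ((x - t) / e)) / e\<^sup>2 + (Uw' (- t / e) - Uw' ((1 - t) / e)) / e"

definition layer_t :: "real \<Rightarrow> real \<Rightarrow> real \<Rightarrow> real" where
  "layer_t e t x = (Uw' (- t / e) - Uw' ((x - t) / e)) / e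
     + (x * fAC (Uw (- t / e)) - x\<^sup>2 / 2 * (fAC (Uw (- t / e)) - fAC (Uw ((1 - t) / e)))) / e\<^sup>2"

definition layer_tx :: "real \<Rightarrow> real \<Rightarrow> real \<Rightarrow> real" where
  "layer_tx e t x = (fAC (Uw (- t / e)) - fAC (Uw ((x - t) / e))
     - x * (fAC (Uw (- t / e)) - fAC (Uw ((1 - t) / e)))) / e\<^sup>2"

definition layer_txx :: "real \<Rightarrow> real \<Rightarrow> real \<Rightarrow> real" where
  "layer_txx e t x = - fAC' (Uw ((x - t) / e)) * Uw' ((x - t) / e) / e ^ 3
     - (fAC (Uw (- t / e)) - fAC (Uw ((1 - t) / e))) / e\<^sup>2"

definition layer_mass :: "real \<Rightarrow> real \<Rightarrow> real" where
  "layer_mass e t = e * (Uw_primitive ((1 - t) / e) - Uw_primitive (- t / e)) - Uw (- t / e)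
     - Uw' (- t / e) / (2 * e) + (Uw' (- t / e) - Uw' ((1 - t) / e)) / (6 * e)"

definition layer_mass_t :: "real \<Rightarrow> real \<Rightarrow> real" where
  "layer_mass_t e t = Uw (- t / e) - Uw ((1 - t) / e) + Uw' (- t / e) / e
     + fAC (Uw (- t / e)) / (2 * e\<^sup>2) - (fAC (Uw (- t / e)) - fAC (Uw ((1 - t) / e))) / (6 * e\<^sup>2)"

lemma layer_deriv_x: "e \<noteq> 0 \<Longrightarrow> (layer e t has_real_derivative layer_x e t x) (at x)"
  unfolding layer_def[abs_def] layer_x_def
  by (auto intro!: derivative_eq_intros simp: field_simps power2_eq_square)

lemma layer_x_deriv_x: "e \<noteq> 0 \<Longrightarrow> (layer_x e t has_real_derivative layer_xx e t x) (at x)"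
  unfolding layer_x_def[abs_def] layer_xx_def
  by (auto intro!: derivative_eq_intros simp: field_simps power2_eq_square)

lemma layer_deriv_t: "e \<noteq> 0 \<Longrightarrow> ((\<lambda>t. layer e t x) has_real_derivative layer_t e t x) (at t)"
  unfolding layer_def layer_t_def
  by (auto intro!: derivative_eq_intros simp: field_simps power2_eq_square)

lemma layer_t_deriv_x: "e \<noteq> 0 \<Longrightarrow> (layer_t e t has_real_derivative layer_tx e t x) (at x)"
  unfolding layer_t_def[abs_def] layer_tx_def
  by (auto intro!: derivative_eq_intros simp: field_simps power2_eq_square)

lemma layer_tx_deriv_x: "e \<noteq> 0 \<Longrightarrow> (layer_tx e t has_real_derivative layer_txx e t x) (at x)"
  unfolding layer_tx_def[abs_def] layer_txx_def
  by (auto intro!: derivative_eq_intros simp: field_simps power2_eq_square power3_eq_cube)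

lemma layer_mass_deriv_t: "e \<noteq> 0 \<Longrightarrow> (layer_mass e has_real_derivative layer_mass_t e t) (at t)"
  unfolding layer_mass_def[abs_def] layer_mass_t_def
  by (auto intro!: derivative_eq_intros simp: field_simps power2_eq_square)

lemma layer_tx_boundary: "layer_tx e t 0 = 0" "layer_tx e t 1 = 0"
  by (simp_all add: layer_tx_def)

lemma continuous_on_layer_xx: "e \<noteq> 0 \<Longrightarrow> continuous_on S (layer_xx e t)"
  unfolding layer_xx_def fAC_def by (intro continuous_intros) auto

lemma continuous_on_layer_txx: "e \<noteq> 0 \<Longrightarrow> continuous_on S (layer_txx e t)"
  unfolding layer_txx_def fAC_def fAC'_def Uw'_def Uw_tail_def by (intro continuous_intros) auto

lemma layer_has_integral:
  assumes "e \<noteq> 0"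
  shows "(layer e t has_integral layer_mass e t) {0..1}"
proof -
  define F where "F x = e * Uw_primitive ((x - t) / e) - x * Uw (- t / e) - x\<^sup>2 / 2 * Uw' (- t / e) / e
    + x ^ 3 / 6 * (Uw' (- t / e) - Uw' ((1 - t) / e)) / e" for x
  have "(F has_real_derivative layer e t x) (at x within {0..1})" for x
    unfolding F_def[abs_def] layer_def using assms
    by (auto intro!: derivative_eq_intros simp: field_simps power2_eq_square power3_eq_cube)
  then have "(layer e t has_integral F 1 - F 0) {0..1}"
    by (intro fundamental_theorem_of_calculus) (auto simp: has_real_derivative_iff_has_vector_derivative)
  moreover have "F 1 - F 0 = layer_mass e t"
    by (simp add: F_def layer_mass_def field_simps)
  ultimately show ?thesis
    by simp
qed

lemma layer_estimates:
  assumes e: "0 < e" "e \<le> 1" and x: "\<bar>x\<bar> \<le> 1"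
    and tails: "Uw_tail (- t / e) \<le> \<delta>" "Uw_tail ((1 - t) / e) \<le> \<delta>" and t: "0 < t"
  defines "y \<equiv> (x - t) / e"
  shows "\<bar>layer e t x - (Uw y + 1)\<bar> \<le> 4 * \<delta> / e"
    and "\<bar>e\<^sup>2 * layer_xx e t x - fAC (Uw y)\<bar> \<le> 2 * \<delta>"
    and "\<bar>layer_t e t x + Uw' y / e\<bar> \<le> 4 * \<delta> / e\<^sup>2"
    and "\<bar>e\<^sup>2 * layer_txx e t x + fAC' (Uw y) * Uw' y / e\<bar> \<le> 2 * \<delta>"
proof -
  have "\<bar>Uw (- t / e) + 1\<bar> \<le> \<delta>"
    using Uw_minus_sgn_le_tail[of "- t / e"] tails e t by (simp add: divide_neg_pos)
  moreover have "\<bar>Uw' (- t / e)\<bar> \<le> \<delta>" "\<bar>Uw' ((1 - t) / e)\<bar> \<le> \<delta>"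
    "\<bar>fAC (Uw (- t / e))\<bar> \<le> \<delta>" "\<bar>fAC (Uw ((1 - t) / e))\<bar> \<le> \<delta>"
    using tails abs_Uw'_le_tail abs_fAC_Uw_le_tail order_trans by blast+
  moreover have "x\<^sup>2 \<le> 1"
    using x by (simp add: abs_square_le_1)
  ultimately have
    "\<bar>e * (Uw (- t / e) + 1)\<bar> \<le> \<delta>" "\<bar>x * Uw' (- t / e)\<bar> \<le> \<delta>"
    "\<bar>x\<^sup>2 / 2 * (Uw' (- t / e) - Uw' ((1 - t) / e))\<bar> \<le> 2 * \<delta>"
    "\<bar>e * (Uw' (- t / e) - Uw' ((1 - t) / e))\<bar> \<le> 2 * \<delta>" "\<bar>e * Uw' (- t / e)\<bar> \<le> \<delta>"
    "\<bar>x * fAC (Uw (- t / e))\<bar> \<le> \<delta>"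
    "\<bar>x\<^sup>2 / 2 * (fAC (Uw (- t / e)) - fAC (Uw ((1 - t) / e)))\<bar> \<le> 2 * \<delta>"
    "\<bar>fAC (Uw (- t / e)) - fAC (Uw ((1 - t) / e))\<bar> \<le> 2 * \<delta>"
    using e x by (auto intro!: abs_mult_le_of_abs_le_1)
  note bounds = this
  have "e * (layer e t x - (Uw y + 1)) = - (e * (Uw (- t / e) + 1)) - x * Uw' (- t / e)
      + x\<^sup>2 / 2 * (Uw' (- t / e) - Uw' ((1 - t) / e))"
    using e by (simp add: layer_def y_def field_simps)
  then have "\<bar>e * (layer e t x - (Uw y + 1))\<bar> \<le> 4 * \<delta>"
    using bounds(1-3) by linarith
  then show "\<bar>layer e t x - (Uw y + 1)\<bar> \<le> 4 * \<delta> / e"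
    using e by (simp add: abs_mult pos_le_divide_eq mult.commute)
  have "e\<^sup>2 * layer_xx e t x - fAC (Uw y) = e * (Uw' (- t / e) - Uw' ((1 - t) / e))"
    using e by (simp add: layer_xx_def y_def field_simps power2_eq_square)
  then show "\<bar>e\<^sup>2 * layer_xx e t x - fAC (Uw y)\<bar> \<le> 2 * \<delta>"
    using bounds(4) by simp
  have "e\<^sup>2 * (layer_t e t x + Uw' y / e) = e * Uw' (- t / e) + x * fAC (Uw (- t / e))
      - x\<^sup>2 / 2 * (fAC (Uw (- t / e)) - fAC (Uw ((1 - t) / e)))"
    using e by (simp add: layer_t_def y_def field_simps power2_eq_square)
  then have "\<bar>e\<^sup>2 * (layer_t e t x + Uw' y / e)\<bar> \<le> 4 * \<delta>"
    using bounds(5-7) by linarith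
  then show "\<bar>layer_t e t x + Uw' y / e\<bar> \<le> 4 * \<delta> / e\<^sup>2"
    using e by (simp add: abs_mult pos_le_divide_eq mult.commute)
  have "e\<^sup>2 * layer_txx e t x + fAC' (Uw y) * Uw' y / e
      = - (fAC (Uw (- t / e)) - fAC (Uw ((1 - t) / e)))"
    using e by (simp add: layer_txx_def y_def field_simps power2_eq_square power3_eq_cube)
  then show "\<bar>e\<^sup>2 * layer_txx e t x + fAC' (Uw y) * Uw' y / e\<bar> \<le> 2 * \<delta>"
    using bounds(8) by simp
qed

lemma layer_mass_t_estimate:
  assumes e: "0 < e" "e \<le> 1" and t: "0 < t" "t < 1" and small: "8 * \<delta> \<le> e\<^sup>2"
    and tails: "Uw_tail (- t / e) \<le> \<delta>" "Uw_tail ((1 - t) / e) \<le> \<delta>"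
  shows "\<bar>layer_mass_t e t + 2\<bar> \<le> 1 / 2"
proof -
  define r where "r = e * Uw' (- t / e) + fAC (Uw (- t / e)) / 3 + fAC (Uw ((1 - t) / e)) / 6"
  have "\<bar>Uw (- t / e) + 1\<bar> \<le> \<delta>" "\<bar>Uw ((1 - t) / e) - 1\<bar> \<le> \<delta>"
    using Uw_minus_sgn_le_tail[of "- t / e"] Uw_minus_sgn_le_tail[of "(1 - t) / e"] tails e t
    by (simp_all add: divide_neg_pos)
  moreover have "\<bar>r\<bar> \<le> 2 * \<delta>"
  proof -
    have "\<bar>fAC (Uw (- t / e))\<bar> \<le> \<delta>" "\<bar>fAC (Uw ((1 - t) / e))\<bar> \<le> \<delta>"
      using tails abs_fAC_Uw_le_tail order_trans by blast+
    moreover have "\<bar>e * Uw' (- t / e)\<bar> \<le> \<delta>"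
      using e tails(1) abs_Uw'_le_tail[of "- t / e"] by (intro abs_mult_le_of_abs_le_1) auto
    ultimately show ?thesis
      unfolding r_def by linarith
  qed
  then have "\<bar>r / e\<^sup>2\<bar> \<le> 1 / 4"
    using small e by (simp add: abs_div field_simps)
  moreover have "2 * \<delta> \<le> 1 / 4"
    using small e power_le_one[of e 2] by linarith
  moreover have "layer_mass_t e t + 2 = (Uw (- t / e) + 1) - (Uw ((1 - t) / e) - 1) + r / e\<^sup>2"
    using e by (simp add: layer_mass_t_def r_def field_simps power2_eq_square)
  ultimately show ?thesis
    by linarith
qed

section \<open>The multi-layer profile and its derivatives along the manifold\<close>

definition layer_sign :: "nat \<Rightarrow> real" where
  "layer_sign j = (-1) ^ (j + 1)"

lemma abs_layer_sign [simp]: "\<bar>layer_sign j\<bar> = 1"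
  by (simp add: layer_sign_def power_abs)

lemma layer_sign_mult_self [simp]: "layer_sign j * layer_sign j = 1"
  by (simp add: layer_sign_def power_mult_distrib[symmetric])

lemma fAC_layer_sign_mult: "fAC (layer_sign j * u) = layer_sign j * fAC u"
  using layer_sign_mult_self[of j] by (simp add: fAC_def power3_eq_cube algebra_simps)

lemma fAC'_layer_sign_mult: "fAC' (layer_sign j * u) = fAC' u"
  using layer_sign_mult_self[of j] by (simp add: fAC'_def power2_eq_square algebra_simps)

lemma sum_layer_sign_below: "1 \<le> k \<Longrightarrow> (\<Sum>j=1..<k. layer_sign j) = (if even k then 1 else 0)"
  by (induction k rule: dec_induct) (auto simp: layer_sign_def)

text \<open>Kinks to the left of a point have reached \<open>+1\<close> and contribute \<open>2 * layer_sign j\<close>, kinks to the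
  right contribute nothing; together with the constant \<open>-1\<close> they cancel.\<close>

lemma sum_layer_limits:
  assumes "k \<in> {1..M}"
  shows "(\<Sum>j=1..M. layer_sign j * (if j < k then 2 else if j = k then a + 1 else 0))
    = 1 + layer_sign k * a"
proof -
  have "{j \<in> {1..M}. j < k} = {1..<k}"
    using assms by auto
  then have "(\<Sum>j=1..M. if j < k then 2 * layer_sign j else 0) = 2 * (\<Sum>j=1..<k. layer_sign j)"
    by (simp add: sum.inter_filter[symmetric] sum_distrib_left)
  moreover have "layer_sign j * (if j < k then 2 else if j = k then a + 1 else 0)
      = (if j < k then 2 * layer_sign j else 0) + (if j = k then layer_sign k * (a + 1) else 0)" for j
    by simp
  moreover have "2 * (\<Sum>j=1..<k. layer_sign j) + layer_sign k = 1"
    using assms sum_layer_sign_below[of k] by (cases "even k") (auto simp: layer_sign_def)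
  ultimately show ?thesis
    using assms by (simp add: sum.distrib algebra_simps)
qed

lemma uh_eq_layers:
  assumes "e \<noteq> 0"
  shows "uh e N h x = -1 + (\<Sum>j=1..N+1. layer_sign j * layer e (h j) x)"
proof -
  have "(layers e N h has_real_derivative (\<Sum>j=1..N+1. layer_sign j * (Uw' ((y - h j) / e) / e)))
      (at y)" for y
    unfolding layers_def[abs_def] layer_sign_def using assms
    by (intro DERIV_sum) (auto intro!: derivative_eq_intros)
  then have deriv_layers:
      "deriv (layers e N h) y = (\<Sum>j=1..N+1. layer_sign j * (Uw' ((y - h j) / e) / e))" for y
    by (rule DERIV_imp_deriv)
  have layers_eq: "layers e N h y = (\<Sum>j=1..N+1. layer_sign j * Uw ((y - h j) / e))" for y
    by (simp add: layers_def layer_sign_def)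
  have layer_sum: "(\<Sum>j=1..N+1. layer_sign j * layer e (h j) x) =
      (\<Sum>j=1..N+1. layer_sign j * Uw ((x - h j) / e)) - (\<Sum>j=1..N+1. layer_sign j * Uw ((0 - h j) / e))
      - x * (\<Sum>j=1..N+1. layer_sign j * (Uw' ((0 - h j) / e) / e))
      + x\<^sup>2 / 2 * ((\<Sum>j=1..N+1. layer_sign j * (Uw' ((0 - h j) / e) / e))
                   - (\<Sum>j=1..N+1. layer_sign j * (Uw' ((1 - h j) / e) / e)))"
    by (simp add: layer_def sum_subtractf sum.distrib sum_distrib_left algebra_simps
        diff_divide_distrib add_divide_distrib)
  show ?thesis
    unfolding uh_def betaN_def Let_def deriv_layers layers_eq layer_sum
    by (simp del: sum.cl_ivl_Suc add: field_simps)
qed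

lemma mass_eq_layer_masses:
  assumes "e \<noteq> 0"
  shows "mass e N h = -1 + (\<Sum>j=1..N+1. layer_sign j * layer_mass e (h j))"
proof -
  have "((\<lambda>x. -1 + (\<Sum>j=1..N+1. layer_sign j * layer e (h j) x)) has_integral
      -1 + (\<Sum>j=1..N+1. layer_sign j * layer_mass e (h j))) {0..1}"
    using has_integral_const_real[of "-1::real" 0 1] assms
    by (intro has_integral_add has_integral_sum has_integral_mult_right layer_has_integral) auto
  then show ?thesis
    unfolding mass_def uh_eq_layers[OF assms] by (rule integral_unique)
qed

lemma DERIV_signed_layer_sum:
  assumes "e \<noteq> 0"
  shows "((\<lambda>x. -1 + (\<Sum>j=1..N+1. layer_sign j * layer e (h j) x)) has_real_derivative
    (\<Sum>j=1..N+1. layer_sign j * layer_x e (h j) x)) (at x)"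
proof -
  have "((\<lambda>x. -1 + (\<Sum>j=1..N+1. layer_sign j * layer e (h j) x)) has_real_derivative
      0 + (\<Sum>j=1..N+1. layer_sign j * layer_x e (h j) x)) (at x)"
    by (intro DERIV_add DERIV_const DERIV_sum DERIV_cmult layer_deriv_x assms)
  then show ?thesis
    by simp
qed

lemma DERIV_signed_layer_x_sum:
  "e \<noteq> 0 \<Longrightarrow> ((\<lambda>x. \<Sum>j=1..N+1. layer_sign j * layer_x e (h j) x) has_real_derivative
    (\<Sum>j=1..N+1. layer_sign j * layer_xx e (h j) x)) (at x)"
  by (intro DERIV_sum DERIV_cmult layer_x_deriv_x)

definition shifted_positions ::
    "nat \<Rightarrow> ((nat \<Rightarrow> real) \<Rightarrow> real) \<Rightarrow> (nat \<Rightarrow> real) \<Rightarrow> nat \<Rightarrow> real \<Rightarrow> nat \<Rightarrow> real" where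
  "shifted_positions N H \<xi> i s = hcomb N (\<xi>(i := \<xi> i + s)) (H (\<xi>(i := \<xi> i + s)))"

lemma DERIV_signed_sum_shifted_positions:
  fixes g g' :: "real \<Rightarrow> real"
  assumes g: "\<And>t. (g has_real_derivative g' t) (at t)"
    and i: "i \<in> {1..N}"
    and H': "((\<lambda>s. H (\<xi>(i := \<xi> i + s))) has_real_derivative H') (at 0)"
  shows "((\<lambda>s. \<Sum>j=1..N+1. layer_sign j * g (shifted_positions N H \<xi> i s j)) has_real_derivative
           layer_sign i * g' (\<xi> i) + layer_sign (N+1) * g' (H \<xi>) * H') (at 0)"
proof -
  have "((\<lambda>s. \<xi> i + s) has_real_derivative 1) (at 0)"
    by (auto intro!: derivative_eq_intros)
  from DERIV_chain2[OF g this]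
  have "((\<lambda>s. layer_sign j * g (\<xi> j + (if j = i then s else 0))) has_real_derivative
      (if j = i then layer_sign i * g' (\<xi> i) else 0)) (at 0)" for j
    by (cases "j = i") (auto intro!: derivative_eq_intros)
  then have "((\<lambda>s. \<Sum>j=1..N. layer_sign j * g (\<xi> j + (if j = i then s else 0))) has_real_derivative
      (\<Sum>j=1..N. if j = i then layer_sign i * g' (\<xi> i) else 0)) (at 0)"
    by (intro DERIV_sum)
  then have first: "((\<lambda>s. \<Sum>j=1..N. layer_sign j * g (\<xi> j + (if j = i then s else 0))) has_real_derivative
      layer_sign i * g' (\<xi> i)) (at 0)"
    using i by simp
  have last: "((\<lambda>s. layer_sign (N+1) * g (H (\<xi>(i := \<xi> i + s)))) has_real_derivative
      layer_sign (N+1) * g' (H \<xi>) * H') (at 0)"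
    using DERIV_cmult[OF DERIV_chain2[OF g H'], of "layer_sign (N+1)"] by (simp add: mult.assoc)
  have "shifted_positions N H \<xi> i s j =
      (if j = N+1 then H (\<xi>(i := \<xi> i + s)) else \<xi> j + (if j = i then s else 0))" for s j
    using i by (auto simp: shifted_positions_def hcomb_def)
  then show ?thesis
    using DERIV_add[OF first last] by simp
qed

lemma uxi_i_eq_layer_t:
  assumes "e \<noteq> 0" and "i \<in> {1..N}"
    and "((\<lambda>s. H (\<xi>(i := \<xi> i + s))) has_real_derivative H') (at 0)"
  shows "uxi_i e N H \<xi> i x = layer_sign i * layer_t e (\<xi> i) x + layer_sign (N+1) * layer_t e (H \<xi>) x * H'"
proof -
  have "((\<lambda>s. -1 + (\<Sum>j=1..N+1. layer_sign j * layer e (shifted_positions N H \<xi> i s j) x))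
      has_real_derivative layer_sign i * layer_t e (\<xi> i) x + layer_sign (N+1) * layer_t e (H \<xi>) x * H')
      (at 0)"
    using DERIV_add[OF DERIV_const
        DERIV_signed_sum_shifted_positions[OF layer_deriv_t[OF assms(1)] assms(2,3)]]
    by (simp only: add_0_left)
  then show ?thesis
    unfolding uxi_i_def uxi_def uh_eq_layers[OF assms(1)] shifted_positions_def
    by (rule DERIV_imp_deriv)
qed

lemma mass_constraint_derivative:
  assumes "e \<noteq> 0" and "i \<in> {1..N}"
    and "((\<lambda>s. H (\<xi>(i := \<xi> i + s))) has_real_derivative H') (at 0)"
    and "\<forall>\<^sub>F s in nhds 0. mass e N (shifted_positions N H \<xi> i s) = \<mu>"
  shows "layer_sign i * layer_mass_t e (\<xi> i) + layer_sign (N+1) * layer_mass_t e (H \<xi>) * H' = 0"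
proof -
  have "((\<lambda>s. mass e N (shifted_positions N H \<xi> i s)) has_real_derivative
      layer_sign i * layer_mass_t e (\<xi> i) + layer_sign (N+1) * layer_mass_t e (H \<xi>) * H') (at 0)"
    using DERIV_add[OF DERIV_const
        DERIV_signed_sum_shifted_positions[OF layer_mass_deriv_t[OF assms(1)] assms(2,3)]]
    by (simp only: add_0_left mass_eq_layer_masses[OF assms(1)])
  moreover have "((\<lambda>s. mass e N (shifted_positions N H \<xi> i s)) has_real_derivative 0) (at 0)"
    by (subst DERIV_cong_ev[OF refl assms(4) refl]) simp
  ultimately show ?thesis
    by (rule DERIV_unique)
qed

section \<open>Geometry of the admissible positions\<close>

lemma Omega_separated:
  assumes h: "h \<in> Omega e \<rho> N" and "1 \<le> j" "j < k" "k \<le> N+1"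
  shows "h j + e / \<rho> < h k"
proof -
  from \<open>j < k\<close> have "Suc j \<le> k"
    by simp
  then show ?thesis
    using \<open>k \<le> N+1\<close>
  proof (induction k rule: dec_induct)
    case base
    have "e / \<rho> < \<bar>hext N h (j+1) - hext N h j\<bar>" "h j < h (j+1)"
      using h \<open>1 \<le> j\<close> base unfolding Omega_def by auto
    then show ?case
      using \<open>1 \<le> j\<close> base by (simp add: hext_def)
  next
    case (step k)
    have "h k < h (Suc k)"
      using h \<open>1 \<le> j\<close> step unfolding Omega_def by auto
    then show ?case
      using step by simp
  qed
qed

lemma Omega_inside:
  assumes h: "h \<in> Omega e \<rho> N" and "0 < e / \<rho>" and j: "j \<in> {1..N+1}"
  shows "e / \<rho> / 2 < h j" and "h j < 1 - e / \<rho> / 2"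
proof -
  have "e / \<rho> < \<bar>hext N h 1 - hext N h 0\<bar>" "e / \<rho> < \<bar>hext N h (N+2) - hext N h (N+1)\<bar>"
    using h unfolding Omega_def by (auto dest: bspec[of _ _ 0] bspec[of _ _ "N+1"])
  moreover have "0 < h 1" "h (N+1) < 1"
    using h unfolding Omega_def by auto
  ultimately have "e / \<rho> / 2 < h 1" "h (N+1) < 1 - e / \<rho> / 2"
    by (auto simp: hext_def)
  moreover have "h 1 \<le> h j" "h j \<le> h (N+1)"
    using Omega_separated[OF h, of 1 j] Omega_separated[OF h, of j "N+1"] \<open>0 < e / \<rho>\<close> j
    by (cases "j = 1"; cases "j = N+1"; force)+
  ultimately show "e / \<rho> / 2 < h j" "h j < 1 - e / \<rho> / 2"
    by linarith+
qed

lemma nearest_layer: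
  fixes h :: "nat \<Rightarrow> real"
  assumes "0 < D" and sep: "\<And>j k. 1 \<le> j \<Longrightarrow> j < k \<Longrightarrow> k \<le> N+1 \<Longrightarrow> h j + D < h k"
  obtains k where "k \<in> {1..N+1}"
    and "\<And>j. j \<in> {1..N+1} \<Longrightarrow> j \<noteq> k \<Longrightarrow> D / 2 \<le> \<bar>x - h j\<bar>"
    and "\<And>j. j \<in> {1..N+1} \<Longrightarrow> j < k \<Longrightarrow> h j < x"
    and "\<And>j. j \<in> {1..N+1} \<Longrightarrow> k < j \<Longrightarrow> x < h j"
proof
  define k where "k = arg_min_on (\<lambda>j. \<bar>x - h j\<bar>) {1..N+1}"
  have k: "k \<in> {1..N+1}" and closest: "\<And>j. j \<in> {1..N+1} \<Longrightarrow> \<bar>x - h k\<bar> \<le> \<bar>x - h j\<bar>"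
    using arg_min_if_finite[of "{1..N+1}" "\<lambda>j. \<bar>x - h j\<bar>"] unfolding k_def by force+
  show "k \<in> {1..N+1}"
    by (rule k)
  fix j assume j: "j \<in> {1..N+1}"
  show "D / 2 \<le> \<bar>x - h j\<bar>" if "j \<noteq> k"
  proof -
    have "D < \<bar>h j - h k\<bar>"
      using sep[of j k] sep[of k j] j k that by (cases "j < k") auto
    then show ?thesis
      using closest[OF j] by arith
  qed
  show "h j < x" if "j < k"
    using closest[OF j] sep[of j k] j k that \<open>0 < D\<close> by auto
  show "x < h j" if "k < j"
    using closest[OF j] sep[of k j] j k that \<open>0 < D\<close> by auto
qed

locale layer_configuration =
  fixes e \<delta> :: real and N k :: nat and h :: "nat \<Rightarrow> real" and x :: real
  assumes e: "0 < e" "e \<le> 1" and x: "0 \<le> x" "x \<le> 1" and k: "k \<in> {1..N+1}"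
    and positive: "\<And>j. j \<in> {1..N+1} \<Longrightarrow> 0 < h j"
    and boundary_tails:
      "\<And>j. j \<in> {1..N+1} \<Longrightarrow> Uw_tail (- h j / e) \<le> \<delta> \<and> Uw_tail ((1 - h j) / e) \<le> \<delta>"
    and far_tails: "\<And>j. j \<in> {1..N+1} \<Longrightarrow> j \<noteq> k \<Longrightarrow> Uw_tail ((x - h j) / e) \<le> \<delta>"
    and left: "\<And>j. j \<in> {1..N+1} \<Longrightarrow> j < k \<Longrightarrow> h j < x"
    and right: "\<And>j. j \<in> {1..N+1} \<Longrightarrow> k < j \<Longrightarrow> x < h j"
    and small: "8 * real (N+1) * \<delta> \<le> e\<^sup>2"
begin

definition u :: real where
  "u = -1 + (\<Sum>j=1..N+1. layer_sign j * layer e (h j) x)"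

definition y :: "nat \<Rightarrow> real" where
  "y j = (x - h j) / e"

lemma delta_nonneg: "0 \<le> \<delta>"
  using boundary_tails[of 1] Uw_tail_pos[of "- h 1 / e"] by auto

lemma delta_le: "\<delta> \<le> \<delta> / e" "\<delta> / e \<le> \<delta> / e\<^sup>2"
  using delta_nonneg e power_le_one[of e 2] by (auto simp: field_simps mult_left_le power2_eq_square)

lemma delta_small: "8 * real (N+1) * \<delta> \<le> e" "4 * \<delta> \<le> e"
proof -
  have "e\<^sup>2 \<le> e"
    using e by (simp add: power2_eq_square mult_left_le_one_le)
  moreover have "4 * \<delta> \<le> 8 * real (N+1) * \<delta>"
    using delta_nonneg by (simp add: mult_right_mono)
  ultimately show "8 * real (N+1) * \<delta> \<le> e" "4 * \<delta> \<le> e"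
    using small by linarith+
qed

lemma layer_estimates_at:
  assumes "j \<in> {1..N+1}"
  shows "\<bar>layer e (h j) x - (Uw (y j) + 1)\<bar> \<le> 4 * \<delta> / e"
    and "\<bar>e\<^sup>2 * layer_xx e (h j) x - fAC (Uw (y j))\<bar> \<le> 2 * \<delta>"
    and "\<bar>layer_t e (h j) x + Uw' (y j) / e\<bar> \<le> 4 * \<delta> / e\<^sup>2"
    and "\<bar>e\<^sup>2 * layer_txx e (h j) x + fAC' (Uw (y j)) * Uw' (y j) / e\<bar> \<le> 2 * \<delta>"
  using layer_estimates[OF e _ _ _ positive[OF assms], of x \<delta>] boundary_tails[OF assms] x
  unfolding y_def by auto

lemma far_kink:
  assumes "j \<in> {1..N+1}" "j \<noteq> k"
  shows "\<bar>Uw (y j) - (if j < k then 1 else -1)\<bar> \<le> \<delta>"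
    and "\<bar>Uw' (y j)\<bar> \<le> \<delta>" and "\<bar>fAC (Uw (y j))\<bar> \<le> \<delta>"
proof -
  have "y j \<noteq> 0 \<and> sgn (y j) = (if j < k then 1 else -1)"
  proof (cases "j < k")
    case True
    then have "0 < y j"
      using left[OF assms(1)] e by (simp add: y_def)
    then show ?thesis
      using True by simp
  next
    case False
    then have "y j < 0"
      using right[OF assms(1)] assms(2) e by (simp add: y_def divide_neg_pos)
    then show ?thesis
      using False by simp
  qed
  then show "\<bar>Uw (y j) - (if j < k then 1 else -1)\<bar> \<le> \<delta>"
    using Uw_minus_sgn_le_tail[of "y j"] far_tails[OF assms] by (simp add: y_def)
  show "\<bar>Uw' (y j)\<bar> \<le> \<delta>" "\<bar>fAC (Uw (y j))\<bar> \<le> \<delta>"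
    using far_tails[OF assms] abs_Uw'_le_tail abs_fAC_Uw_le_tail order_trans unfolding y_def by blast+
qed

lemma u_approx: "\<bar>u - layer_sign k * Uw (y k)\<bar> \<le> 5 * real (N+1) * \<delta> / e"
proof -
  define c where "c j = layer_sign j * (if j < k then 2 else if j = k then Uw (y k) + 1 else 0)" for j
  have "\<bar>layer_sign j * layer e (h j) x - c j\<bar> \<le> 5 * \<delta> / e" if j: "j \<in> {1..N+1}" for j
  proof -
    have "\<bar>layer e (h j) x - (if j < k then 2 else if j = k then Uw (y k) + 1 else 0)\<bar> \<le> 5 * \<delta> / e"
      using layer_estimates_at(1)[OF j] far_kink(1)[OF j] delta_le(1)
      by (cases "j = k") (auto split: if_splits)
    then show ?thesis
      unfolding c_def by (simp add: abs_mult right_diff_distrib[symmetric])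
  qed
  then have "\<bar>(\<Sum>j=1..N+1. layer_sign j * layer e (h j) x) - (\<Sum>j=1..N+1. c j)\<bar>
      \<le> real (card {1..N+1}) * (5 * \<delta> / e)"
    by (rule abs_sum_diff_le)
  also have "real (card {1..N+1}) * (5 * \<delta> / e) = 5 * real (N+1) * \<delta> / e"
    by simp
  moreover have "(\<Sum>j=1..N+1. c j) = 1 + layer_sign k * Uw (y k)"
    unfolding c_def using k by (rule sum_layer_limits)
  ultimately show ?thesis
    unfolding u_def by linarith
qed

lemma abs_u_minus_le_1: "\<bar>u - layer_sign k * Uw (y k)\<bar> \<le> 1"
proof -
  have "5 * real (N+1) * \<delta> / e \<le> 8 * real (N+1) * \<delta> / e"
    using delta_nonneg e by (intro divide_right_mono mult_right_mono) auto
  moreover have "8 * real (N+1) * \<delta> / e \<le> 1"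
    using delta_small(1) e by (simp add: pos_divide_le_eq)
  ultimately show ?thesis
    using u_approx by linarith
qed

lemma abs_u_le_2: "\<bar>u\<bar> \<le> 2"
proof -
  have "\<bar>layer_sign k * Uw (y k)\<bar> < 1"
    by (simp add: abs_mult abs_Uw_less_1)
  then show ?thesis
    using abs_u_minus_le_1 by linarith
qed

lemma residual:
  "\<bar>e\<^sup>2 * (\<Sum>j=1..N+1. layer_sign j * layer_xx e (h j) x) - fAC u\<bar> \<le> 43 * real (N+1) * \<delta> / e"
proof -
  have "\<bar>layer_sign j * (e\<^sup>2 * layer_xx e (h j) x)
      - (if j = k then layer_sign k * fAC (Uw (y k)) else 0)\<bar> \<le> 3 * \<delta>"
    if j: "j \<in> {1..N+1}" for j
    using layer_estimates_at(2)[OF j] far_kink(3)[OF j] delta_nonneg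
    by (cases "j = k") (auto simp: abs_mult right_diff_distrib[symmetric])
  then have "\<bar>(\<Sum>j=1..N+1. layer_sign j * (e\<^sup>2 * layer_xx e (h j) x))
      - (\<Sum>j=1..N+1. if j = k then layer_sign k * fAC (Uw (y k)) else 0)\<bar> \<le> real (card {1..N+1}) * (3 * \<delta>)"
    by (rule abs_sum_diff_le)
  also have "real (card {1..N+1}) * (3 * \<delta>) = 3 * real (N+1) * \<delta>"
    by simp
  moreover have "(\<Sum>j=1..N+1. if j = k then layer_sign k * fAC (Uw (y k)) else 0)
      = fAC (layer_sign k * Uw (y k))"
    using k by (simp add: fAC_layer_sign_mult)
  moreover have "(\<Sum>j=1..N+1. layer_sign j * (e\<^sup>2 * layer_xx e (h j) x))
      = e\<^sup>2 * (\<Sum>j=1..N+1. layer_sign j * layer_xx e (h j) x)"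
    unfolding sum_distrib_left by (rule sum.cong) (simp_all add: algebra_simps)
  moreover have "\<bar>fAC u - fAC (layer_sign k * Uw (y k))\<bar> \<le> 8 * (5 * real (N+1) * \<delta> / e)"
    using fAC_lipschitz[of "layer_sign k * Uw (y k)" u] abs_u_minus_le_1 u_approx abs_Uw_less_1[of "y k"]
    by (simp add: abs_mult abs_minus_commute)
  moreover have "3 * real (N+1) * \<delta> \<le> 3 * real (N+1) * \<delta> / e"
    using delta_le(1) mult_left_mono[OF delta_le(1), of "3 * real (N+1)"] by simp
  ultimately show ?thesis
    by linarith
qed

lemma layer_t_bound:
  assumes "j \<in> {1..N+1}"
  shows "\<bar>layer_t e (h j) x\<bar> \<le> 2 / e"
proof -
  have "4 * \<delta> / e\<^sup>2 \<le> 1 / e"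
    using delta_small(2) e by (simp add: field_simps power2_eq_square)
  moreover have "\<bar>Uw' (y j) / e\<bar> \<le> 1 / e"
    using abs_Uw'_le_tail[of "y j"] Uw_tail_le_1[of "y j"] e by (simp add: abs_div divide_right_mono)
  ultimately show ?thesis
    using layer_estimates_at(3)[OF assms] by linarith
qed

text \<open>Up to boundary terms, \<open>layer_t e t\<close> is \<open>-Uw'((x - t)/e)/e\<close>, which the linearised operator
  \<open>e\<^sup>2\<partial>\<^sub>x\<^sub>x - fAC'(Uw((x - t)/e))\<close> annihilates; what remains is the mismatch of \<open>fAC'\<close> at \<open>u\<close> and at
  the kink.\<close>

lemma linearization_mismatch:
  assumes j: "j \<in> {1..N+1}"
  shows "\<bar>(fAC' u - fAC' (Uw (y j))) * (Uw' (y j) / e)\<bar> \<le> 67 * real (N+1) * \<delta> / e\<^sup>2"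
proof (cases "j = k")
  case True
  have "\<bar>fAC' u - fAC' (Uw (y j))\<bar> \<le> 9 * (5 * real (N+1) * \<delta> / e)"
    using fAC'_lipschitz[of "layer_sign k * Uw (y k)" u] abs_u_minus_le_1 u_approx
      abs_Uw_less_1[of "y k"] True
    by (simp add: abs_mult abs_minus_commute fAC'_layer_sign_mult)
  moreover have "\<bar>Uw' (y j) / e\<bar> \<le> 1 / e"
    using abs_Uw'_le_tail[of "y j"] Uw_tail_le_1[of "y j"] e by (simp add: abs_div divide_right_mono)
  ultimately have "\<bar>(fAC' u - fAC' (Uw (y j))) * (Uw' (y j) / e)\<bar> \<le> 9 * (5 * real (N+1) * \<delta> / e) * (1 / e)"
    unfolding abs_mult by (rule mult_mono) (use delta_nonneg e in auto)
  also have "\<dots> = 45 * real (N+1) * \<delta> / e\<^sup>2"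
    by (simp add: power2_eq_square)
  also have "\<dots> \<le> 67 * real (N+1) * \<delta> / e\<^sup>2"
    using delta_nonneg by (intro divide_right_mono mult_right_mono) auto
  finally show ?thesis .
next
  case False
  have "\<bar>fAC' u - fAC' (Uw (y j))\<bar> \<le> 22"
    using abs_fAC'_le[OF abs_u_le_2] abs_fAC'_le[of "Uw (y j)"] abs_Uw_less_1[of "y j"] by simp
  moreover have "\<bar>Uw' (y j) / e\<bar> \<le> \<delta> / e"
    using far_kink(2)[OF j False] e by (simp add: abs_div divide_right_mono)
  ultimately have "\<bar>(fAC' u - fAC' (Uw (y j))) * (Uw' (y j) / e)\<bar> \<le> 22 * (\<delta> / e)"
    unfolding abs_mult by (rule mult_mono) auto
  also have "\<dots> \<le> 22 * (real (N+1) * (\<delta> / e\<^sup>2))"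
  proof -
    have "\<delta> / e\<^sup>2 \<le> real (N+1) * (\<delta> / e\<^sup>2)"
      using delta_nonneg mult_right_mono[of 1 "real (N+1)" "\<delta> / e\<^sup>2"] by simp
    then show ?thesis
      using delta_le(2) by simp
  qed
  also have "\<dots> = 22 * real (N+1) * \<delta> / e\<^sup>2"
    by simp
  also have "\<dots> \<le> 67 * real (N+1) * \<delta> / e\<^sup>2"
    using delta_nonneg by (intro divide_right_mono mult_right_mono) auto
  finally show ?thesis .
qed

lemma linearized_residual:
  assumes j: "j \<in> {1..N+1}"
  shows "\<bar>e\<^sup>2 * layer_txx e (h j) x - fAC' u * layer_t e (h j) x\<bar> \<le> 120 * real (N+1) * \<delta> / e\<^sup>2"
proof -
  define q where "q = \<delta> / e\<^sup>2"
  have "0 \<le> q"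
    using delta_nonneg by (simp add: q_def)
  have "\<bar>fAC' u * (layer_t e (h j) x + Uw' (y j) / e)\<bar> \<le> 11 * (4 * q)"
    unfolding abs_mult q_def
    by (rule mult_mono) (use abs_fAC'_le[OF abs_u_le_2] layer_estimates_at(3)[OF j] in auto)
  moreover have "\<bar>(fAC' u - fAC' (Uw (y j))) * (Uw' (y j) / e)\<bar> \<le> 67 * (real (N+1) * q)"
    using linearization_mismatch[OF j] by (simp add: q_def algebra_simps)
  moreover have "2 * \<delta> \<le> 2 * q"
    using delta_le by (simp add: q_def)
  moreover have "46 * q \<le> 46 * (real (N+1) * q)"
    using \<open>0 \<le> q\<close> mult_right_mono[of 1 "real (N+1)" q] by simp
  moreover have "e\<^sup>2 * layer_txx e (h j) x - fAC' u * layer_t e (h j) x =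
      (e\<^sup>2 * layer_txx e (h j) x + fAC' (Uw (y j)) * Uw' (y j) / e)
      - fAC' u * (layer_t e (h j) x + Uw' (y j) / e) + (fAC' u - fAC' (Uw (y j))) * (Uw' (y j) / e)"
    by (simp add: algebra_simps)
  ultimately have "\<bar>e\<^sup>2 * layer_txx e (h j) x - fAC' u * layer_t e (h j) x\<bar> \<le> 120 * (real (N+1) * q)"
    using layer_estimates_at(4)[OF j] by linarith
  then show ?thesis
    by (simp add: q_def algebra_simps)
qed

end

lemma Omega_layer_configuration:
  fixes \<delta> :: real
  assumes h: "h \<in> Omega e \<rho> N" and e: "0 < e" "e \<le> 1" and \<rho>: "0 < \<rho>"
    and \<delta>: "\<delta> = 4 * exp (- 1 / (2 * \<rho>))" and small: "8 * real (N+1) * \<delta> \<le> e\<^sup>2"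
    and x: "x \<in> {0..1}"
  obtains k where "layer_configuration e \<delta> N k h x"
proof -
  define D where "D = e / \<rho>"
  have D: "0 < D"
    using e \<rho> by (simp add: D_def)
  have tail: "Uw_tail (d / e) \<le> \<delta>" if "D / 2 \<le> \<bar>d\<bar>" for d
  proof -
    have "D / 2 / e \<le> \<bar>d\<bar> / e"
      using that e by (intro divide_right_mono) auto
    then have "1 / (2 * \<rho>) \<le> \<bar>d / e\<bar>"
      using e by (simp add: D_def abs_div)
    then show ?thesis
      using Uw_tail_le_of_abs_ge \<delta> by simp
  qed
  obtain k where k: "k \<in> {1..N+1}"
    and far: "\<And>j. j \<in> {1..N+1} \<Longrightarrow> j \<noteq> k \<Longrightarrow> D / 2 \<le> \<bar>x - h j\<bar>"
    and left: "\<And>j. j \<in> {1..N+1} \<Longrightarrow> j < k \<Longrightarrow> h j < x"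
    and right: "\<And>j. j \<in> {1..N+1} \<Longrightarrow> k < j \<Longrightarrow> x < h j"
  proof (rule nearest_layer[OF D])
    show "h j + D < h k" if "1 \<le> j" "j < k" "k \<le> N+1" for j k
      using Omega_separated[OF h that] by (simp add: D_def)
  qed auto
  have inside: "D / 2 < h j" "h j < 1 - D / 2" if "j \<in> {1..N+1}" for j
    using Omega_inside[OF h _ that] D unfolding D_def by auto
  show ?thesis
  proof (rule that, unfold_locales)
    fix j assume j: "j \<in> {1..N+1}"
    show "0 < h j"
      using inside[OF j] D by linarith
    show "Uw_tail (- h j / e) \<le> \<delta> \<and> Uw_tail ((1 - h j) / e) \<le> \<delta>"
    proof -
      have "D / 2 \<le> \<bar>- h j\<bar>" "D / 2 \<le> \<bar>1 - h j\<bar>"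
        using inside[OF j] D by (simp_all add: abs_if)
      then show ?thesis
        using tail by (intro conjI)
    qed
    show "Uw_tail ((x - h j) / e) \<le> \<delta>" if "j \<noteq> k"
      using tail far[OF j that] by blast
    show "h j < x" if "j < k"
      using left[OF j that] .
    show "x < h j" if "k < j"
      using right[OF j that] .
  qed (use e x k small in auto)
qed

lemma Omega_pointwise_estimates:
  fixes \<delta> :: real
  assumes h: "h \<in> Omega e \<rho> N" and e: "0 < e" "e \<le> 1" and \<rho>: "0 < \<rho>"
    and \<delta>: "\<delta> = 4 * exp (- 1 / (2 * \<rho>))" and small: "8 * real (N+1) * \<delta> \<le> e\<^sup>2"
    and x: "x \<in> {0..1}"
  defines "U \<equiv> -1 + (\<Sum>j=1..N+1. layer_sign j * layer e (h j) x)"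
  shows "\<bar>U\<bar> \<le> 2"
    and "\<bar>e\<^sup>2 * (\<Sum>j=1..N+1. layer_sign j * layer_xx e (h j) x) - fAC U\<bar> \<le> 43 * real (N+1) * \<delta> / e"
    and "l \<in> {1..N+1} \<Longrightarrow> \<bar>layer_t e (h l) x\<bar> \<le> 2 / e"
    and "l \<in> {1..N+1} \<Longrightarrow>
      \<bar>e\<^sup>2 * layer_txx e (h l) x - fAC' U * layer_t e (h l) x\<bar> \<le> 120 * real (N+1) * \<delta> / e\<^sup>2"
proof -
  obtain k where "layer_configuration e \<delta> N k h x"
    using Omega_layer_configuration[OF h e \<rho> \<delta> small x] by blast
  then interpret layer_configuration e \<delta> N k h x .
  have U: "U = u"
    by (simp add: U_def u_def)
  show "\<bar>U\<bar> \<le> 2"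
    unfolding U by (rule abs_u_le_2)
  show "\<bar>e\<^sup>2 * (\<Sum>j=1..N+1. layer_sign j * layer_xx e (h j) x) - fAC U\<bar> \<le> 43 * real (N+1) * \<delta> / e"
    unfolding U by (rule residual)
  show "\<bar>layer_t e (h l) x\<bar> \<le> 2 / e" if "l \<in> {1..N+1}"
    using layer_t_bound[OF that] .
  show "\<bar>e\<^sup>2 * layer_txx e (h l) x - fAC' U * layer_t e (h l) x\<bar> \<le> 120 * real (N+1) * \<delta> / e\<^sup>2"
    if "l \<in> {1..N+1}"
    unfolding U using linearized_residual[OF that] .
qed

lemma Omega_tangent_estimates:
  fixes \<delta> :: real
  assumes h: "h \<in> Omega e \<rho> N" and e: "0 < e" "e \<le> 1" and \<rho>: "0 < \<rho>"
    and \<delta>: "\<delta> = 4 * exp (- 1 / (2 * \<rho>))" and small: "8 * real (N+1) * \<delta> \<le> e\<^sup>2"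
    and x: "x \<in> {0..1}" and i: "i \<in> {1..N}" and H': "\<bar>H'\<bar> \<le> 2"
  defines "U \<equiv> -1 + (\<Sum>j=1..N+1. layer_sign j * layer e (h j) x)"
    and "w \<equiv> layer_sign i * layer_t e (h i) x + layer_sign (N+1) * layer_t e (h (N+1)) x * H'"
    and "w'' \<equiv> layer_sign i * layer_txx e (h i) x + layer_sign (N+1) * layer_txx e (h (N+1)) x * H'"
  shows "\<bar>w\<bar> \<le> 6 / e" and "\<bar>e\<^sup>2 * w'' - fAC' U * w\<bar> \<le> 360 * real (N+1) * \<delta> / e\<^sup>2"
proof -
  note estimates = Omega_pointwise_estimates[OF h e \<rho> \<delta> small x]
  have "\<bar>layer_t e (h (N+1)) x * H'\<bar> \<le> 2 / e * 2"
    unfolding abs_mult using estimates(3)[of "N+1"] H' e by (intro mult_mono) auto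
  moreover have "\<bar>layer_sign (N+1) * layer_t e (h (N+1)) x * H'\<bar> = \<bar>layer_t e (h (N+1)) x * H'\<bar>"
    "\<bar>layer_sign i * layer_t e (h i) x\<bar> \<le> 2 / e"
    using estimates(3)[of i] i by (simp_all add: abs_mult)
  ultimately show "\<bar>w\<bar> \<le> 6 / e"
    unfolding w_def by linarith
  define X where "X = real (N+1) * \<delta> / e\<^sup>2"
  define R where "R l = e\<^sup>2 * layer_txx e (h l) x - fAC' U * layer_t e (h l) x" for l
  have R: "\<bar>R l\<bar> \<le> 120 * X" if "l \<in> {1..N+1}" for l
    using estimates(4)[OF that] by (simp add: R_def X_def U_def algebra_simps)
  have "\<bar>R (N+1)\<bar> * \<bar>H'\<bar> \<le> 120 * X * 2"
    using R[of "N+1"] H' by (rule mult_mono') auto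
  then have "\<bar>layer_sign (N+1) * R (N+1) * H'\<bar> \<le> 120 * X * 2"
    by (simp add: abs_mult)
  moreover have "\<bar>layer_sign i * R i\<bar> \<le> 120 * X"
    using R[of i] i by (simp add: abs_mult)
  moreover have "e\<^sup>2 * w'' - fAC' U * w = layer_sign i * R i + layer_sign (N+1) * R (N+1) * H'"
    by (simp add: w_def w''_def R_def algebra_simps)
  ultimately have "\<bar>e\<^sup>2 * w'' - fAC' U * w\<bar> \<le> 360 * X"
    by linarith
  then show "\<bar>e\<^sup>2 * w'' - fAC' U * w\<bar> \<le> 360 * real (N+1) * \<delta> / e\<^sup>2"
    by (simp add: X_def algebra_simps)
qed

lemma abs_mass_map_derivative_le_2:
  fixes \<delta> :: real
  assumes h: "hcomb N \<xi> (H \<xi>) \<in> Omega e \<rho> N" and e: "0 < e" "e \<le> 1" and \<rho>: "0 < \<rho>"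
    and \<delta>: "\<delta> = 4 * exp (- 1 / (2 * \<rho>))" and small: "8 * real (N+1) * \<delta> \<le> e\<^sup>2"
    and mass: "mass_map_at e N \<mu> H \<xi>" and i: "i \<in> {1..N}"
  obtains H' where "((\<lambda>s. H (\<xi>(i := \<xi> i + s))) has_real_derivative H') (at 0)" and "\<bar>H'\<bar> \<le> 2"
proof -
  let ?h = "hcomb N \<xi> (H \<xi>)"
  obtain H' where H': "((\<lambda>s. H (\<xi>(i := \<xi> i + s))) has_real_derivative H') (at 0)"
    using mass i unfolding mass_map_at_def real_differentiable_def by blast
  have "\<forall>\<^sub>F s in nhds 0. mass e N (shifted_positions N H \<xi> i s) = \<mu>"
    using mass i by (auto simp: mass_map_at_def shifted_positions_def)
  then have "layer_sign i * layer_mass_t e (\<xi> i) + layer_sign (N+1) * layer_mass_t e (H \<xi>) * H' = 0"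
    using e by (intro mass_constraint_derivative[OF _ i H']) auto
  then have product: "\<bar>layer_mass_t e (H \<xi>)\<bar> * \<bar>H'\<bar> = \<bar>layer_mass_t e (\<xi> i)\<bar>"
    by (metis abs_layer_sign abs_minus_cancel abs_mult add_eq_0_iff mult_1)
  have near_minus_2: "\<bar>layer_mass_t e (?h j) + 2\<bar> \<le> 1 / 2" if j: "j \<in> {1..N+1}" for j
  proof (rule layer_mass_t_estimate[OF e])
    obtain k where "layer_configuration e \<delta> N k ?h 0"
      using Omega_layer_configuration[OF h e \<rho> \<delta> small, of 0] by auto
    then show "Uw_tail (- ?h j / e) \<le> \<delta>" "Uw_tail ((1 - ?h j) / e) \<le> \<delta>"
      using layer_configuration.boundary_tails j by blast+
    have "0 < e / \<rho>"
      using e \<rho> by simp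
    then show "0 < ?h j" "?h j < 1"
      using Omega_inside[OF h _ j] by auto
    have "8 * \<delta> \<le> 8 * real (N+1) * \<delta>"
      using \<delta> mult_right_mono[of 8 "8 * real (N+1)" \<delta>] by simp
    then show "8 * \<delta> \<le> e\<^sup>2"
      using small by linarith
  qed
  have "\<bar>layer_mass_t e (\<xi> i) + 2\<bar> \<le> 1 / 2" "\<bar>layer_mass_t e (H \<xi>) + 2\<bar> \<le> 1 / 2"
    using near_minus_2[of i] near_minus_2[of "N+1"] i by (auto simp: hcomb_def)
  then have "3 / 2 * \<bar>H'\<bar> \<le> 5 / 2"
    using product mult_right_mono[of "3 / 2" "\<bar>layer_mass_t e (H \<xi>)\<bar>" "\<bar>H'\<bar>"] by linarith
  then show ?thesis
    using that[OF H'] by simp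
qed

section \<open>The perturbed energy pairing\<close>

lemma perturbation_integrand_le:
  fixes w U v R W a b c t :: real
  assumes w: "\<bar>w\<bar> \<le> a" and U: "\<bar>U\<bar> \<le> 2" and R: "\<bar>R\<bar> \<le> b" and W: "\<bar>W\<bar> \<le> c"
    and t: "0 < t"
  shows "w * R + W * v - w * (3 * U * v\<^sup>2 + v ^ 3)
    \<le> a * b + c * ((1 + v\<^sup>2) / 2) + a * (6 * v\<^sup>2) + a * ((t * v\<^sup>2 + v ^ 4 / t) / 2)"
proof -
  have "\<bar>v\<bar> \<le> (1 + v\<^sup>2) / 2"
    using zero_le_power2[of "\<bar>v\<bar> - 1"] by (simp add: power2_diff)
  then have "\<bar>W * v\<bar> \<le> c * ((1 + v\<^sup>2) / 2)"
    unfolding abs_mult by (rule mult_mono'[OF W]) auto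
  moreover have "\<bar>w * R\<bar> \<le> a * b"
    unfolding abs_mult by (rule mult_mono'[OF w R]) auto
  moreover have "\<bar>3 * U * v\<^sup>2\<bar> \<le> 6 * v\<^sup>2"
    using U by (simp add: abs_mult mult_right_mono)
  then have "\<bar>w * (3 * U * v\<^sup>2)\<bar> \<le> a * (6 * v\<^sup>2)"
    unfolding abs_mult[of w] by (rule mult_mono'[OF w]) auto
  moreover have "\<bar>v ^ 3\<bar> \<le> (t * v\<^sup>2 + v ^ 4 / t) / 2"
    using abs_cube_le_mean[OF t] by (simp add: power_abs)
  then have "\<bar>w * v ^ 3\<bar> \<le> a * ((t * v\<^sup>2 + v ^ 4 / t) / 2)"
    unfolding abs_mult[of w] by (rule mult_mono'[OF w]) auto
  moreover have "w * (3 * U * v\<^sup>2 + v ^ 3) = w * (3 * U * v\<^sup>2) + w * v ^ 3"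
    by (simp add: distrib_left)
  ultimately show ?thesis
    by linarith
qed

lemma regular_neumannD:
  assumes "regular_neumann v"
  shows "\<And>x. x \<in> {0..1} \<Longrightarrow> (v has_real_derivative deriv v x) (at x)"
    and "\<And>x. x \<in> {0..1} \<Longrightarrow> (deriv v has_real_derivative deriv (deriv v) x) (at x)"
    and "continuous_on {0..1} (deriv (deriv v))" "deriv v 0 = 0" "deriv v 1 = 0"
  using assms by (auto simp: regular_neumann_def DERIV_deriv_iff_real_differentiable)

lemma Lop_add_eq:
  fixes U U' U'' v v' v'' :: "real \<Rightarrow> real"
  assumes U': "\<And>x. (U has_real_derivative U' x) (at x)" and U'': "\<And>x. (U' has_real_derivative U'' x) (at x)"
    and v': "\<And>x. x \<in> {0..1} \<Longrightarrow> (v has_real_derivative v' x) (at x)"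
    and v'': "\<And>x. x \<in> {0..1} \<Longrightarrow> (v' has_real_derivative v'' x) (at x)"
    and x: "x \<in> {0<..<1}"
  shows "Lop e (\<lambda>x. U x + v x) x = e\<^sup>2 * (U'' x + v'' x) - fAC (U x + v x)"
proof -
  have "\<forall>\<^sub>F y in nhds x. y \<in> {0<..<1}"
    using x by (intro eventually_nhds_in_open) auto
  then have "\<forall>\<^sub>F y in nhds x. deriv (\<lambda>x. U x + v x) y = U' y + v' y"
    by eventually_elim (auto intro!: DERIV_imp_deriv DERIV_add U' v')
  then have "deriv (deriv (\<lambda>x. U x + v x)) x = deriv (\<lambda>y. U' y + v' y) x"
    by (rule deriv_cong_ev) simp
  also have "\<dots> = U'' x + v'' x"
    using x by (intro DERIV_imp_deriv DERIV_add U'' v'') auto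
  finally show ?thesis
    by (simp add: Lop_def)
qed

lemma green_identity_neumann:
  fixes w w' w'' v v' v'' :: "real \<Rightarrow> real"
  assumes w': "\<And>x. x \<in> {0..1} \<Longrightarrow> (w has_real_derivative w' x) (at x)"
    and w'': "\<And>x. x \<in> {0..1} \<Longrightarrow> (w' has_real_derivative w'' x) (at x)"
    and v': "\<And>x. x \<in> {0..1} \<Longrightarrow> (v has_real_derivative v' x) (at x)"
    and v'': "\<And>x. x \<in> {0..1} \<Longrightarrow> (v' has_real_derivative v'' x) (at x)"
    and neumann: "w' 0 = 0" "w' 1 = 0" "v' 0 = 0" "v' 1 = 0"
  shows "((\<lambda>x. w x * v'' x - w'' x * v x) has_integral 0) {0..1}"
proof -
  define F where "F x = w x * v' x - w' x * v x" for x
  have "((\<lambda>x. w x * v'' x - w'' x * v x) has_integral F 1 - F 0) {0..1}"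
  proof (rule fundamental_theorem_of_calculus)
    fix x :: real
    assume x: "x \<in> {0..1}"
    have "(F has_real_derivative (w' x * v' x + v'' x * w x) - (w'' x * v x + v' x * w' x)) (at x)"
      unfolding F_def[abs_def] using x by (intro DERIV_diff DERIV_mult w' w'' v' v'')
    then show "(F has_vector_derivative w x * v'' x - w'' x * v x) (at x within {0..1})"
      by (simp add: has_real_derivative_iff_has_vector_derivative[symmetric] has_field_derivative_at_within
          algebra_simps)
  qed simp
  then show ?thesis
    by (simp add: F_def neumann)
qed

text \<open>The integrand of \<open>ip w (Lop e (U + v))\<close> after expanding
  \<open>fAC (U + v) = fAC U + fAC' U * v + 3 U v\<^sup>2 + v\<^sup>3\<close> and moving \<open>e\<^sup>2\<partial>\<^sub>x\<^sub>x\<close> from \<open>v\<close> onto \<open>w\<close>.\<close>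

definition perturbation_integrand ::
    "real \<Rightarrow> (real \<Rightarrow> real) \<Rightarrow> (real \<Rightarrow> real) \<Rightarrow> (real \<Rightarrow> real) \<Rightarrow> (real \<Rightarrow> real) \<Rightarrow> (real \<Rightarrow> real) \<Rightarrow> real \<Rightarrow> real"
  where "perturbation_integrand e w w'' U U'' v x = w x * (e\<^sup>2 * U'' x - fAC (U x))
    + (e\<^sup>2 * w'' x - fAC' (U x) * w x) * v x - w x * (3 * U x * (v x)\<^sup>2 + v x ^ 3)"

lemma ip_Lop_add_eq:
  fixes w U U' U'' v :: "real \<Rightarrow> real"
  assumes U': "\<And>x. (U has_real_derivative U' x) (at x)" and U'': "\<And>x. (U' has_real_derivative U'' x) (at x)"
    and v: "regular_neumann v"
    and I: "((\<lambda>x. w x * (e\<^sup>2 * (U'' x + deriv (deriv v) x) - fAC (U x + v x))) has_integral I) {0..1}"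
  shows "ip w (Lop e (\<lambda>x. U x + v x)) = I"
proof -
  have Lop: "Lop e (\<lambda>x. U x + v x) x = e\<^sup>2 * (U'' x + deriv (deriv v) x) - fAC (U x + v x)"
    if "x \<in> {0..1} - {0, 1}" for x
    using that regular_neumannD(1,2)[OF v] by (intro Lop_add_eq[OF U' U'']) auto
  have "((\<lambda>x. w x * Lop e (\<lambda>x. U x + v x) x) has_integral I) {0..1}"
    by (rule has_integral_spike_finite[OF _ _ I, of "{0, 1}"]) (simp_all add: Lop)
  then show ?thesis
    unfolding ip_def by (rule integral_unique)
qed

lemma has_integral_perturbation_integrand:
  fixes w w' w'' U U' U'' v :: "real \<Rightarrow> real"
  assumes w': "\<And>x. (w has_real_derivative w' x) (at x)" and w'': "\<And>x. (w' has_real_derivative w'' x) (at x)"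
    and neumann: "w' 0 = 0" "w' 1 = 0"
    and U': "\<And>x. (U has_real_derivative U' x) (at x)" and U'': "\<And>x. (U' has_real_derivative U'' x) (at x)"
    and cont: "continuous_on {0..1} w''" "continuous_on {0..1} U''"
    and v: "regular_neumann v"
  shows "(perturbation_integrand e w w'' U U'' v has_integral ip w (Lop e (\<lambda>x. U x + v x))) {0..1}"
proof -
  let ?g = "perturbation_integrand e w w'' U U'' v"
  note v' = regular_neumannD[OF v]
  have continuous: "continuous_on {0..1} f" if "\<And>x. x \<in> {0..1} \<Longrightarrow> (f has_real_derivative f' x) (at x)"
    for f f' :: "real \<Rightarrow> real"
    using that by (meson DERIV_isCont continuous_at_imp_continuous_on)
  have "continuous_on {0..1} ?g"
    unfolding perturbation_integrand_def[abs_def] fAC_def fAC'_def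
    by (intro continuous_intros cont continuous[OF w'] continuous[OF U'] continuous[OF v'(1)])
  then have g: "(?g has_integral integral {0..1} ?g) {0..1}"
    by (intro integrable_integral integrable_continuous_interval)
  moreover have "((\<lambda>x. e\<^sup>2 * (w x * deriv (deriv v) x - w'' x * v x)) has_integral e\<^sup>2 * 0) {0..1}"
    by (intro has_integral_mult_right green_identity_neumann[OF w' w'' v'(1,2) neumann v'(4,5)])
  ultimately have "((\<lambda>x. ?g x + e\<^sup>2 * (w x * deriv (deriv v) x - w'' x * v x)) has_integral
      integral {0..1} ?g + e\<^sup>2 * 0) {0..1}"
    by (rule has_integral_add)
  moreover have "?g x + e\<^sup>2 * (w x * deriv (deriv v) x - w'' x * v x)
      = w x * (e\<^sup>2 * (U'' x + deriv (deriv v) x) - fAC (U x + v x))" for x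
    by (simp add: perturbation_integrand_def fAC_def fAC'_def algebra_simps power2_eq_square power3_eq_cube)
  ultimately have "((\<lambda>x. w x * (e\<^sup>2 * (U'' x + deriv (deriv v) x) - fAC (U x + v x)))
      has_integral integral {0..1} ?g) {0..1}"
    by (simp only: mult_zero_right add_0_right)
  then have "ip w (Lop e (\<lambda>x. U x + v x)) = integral {0..1} ?g"
    by (rule ip_Lop_add_eq[OF U' U'' v])
  with g show ?thesis
    by simp
qed

lemma ip_Lop_perturbation_le:
  fixes w w' w'' U U' U'' v :: "real \<Rightarrow> real"
  assumes w': "\<And>x. (w has_real_derivative w' x) (at x)" and w'': "\<And>x. (w' has_real_derivative w'' x) (at x)"
    and neumann: "w' 0 = 0" "w' 1 = 0"
    and U': "\<And>x. (U has_real_derivative U' x) (at x)" and U'': "\<And>x. (U' has_real_derivative U'' x) (at x)"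
    and cont: "continuous_on {0..1} w''" "continuous_on {0..1} U''"
    and v: "regular_neumann v"
    and bounds: "\<And>x. x \<in> {0..1} \<Longrightarrow> \<bar>w x\<bar> \<le> a" "\<And>x. x \<in> {0..1} \<Longrightarrow> \<bar>U x\<bar> \<le> 2"
      "\<And>x. x \<in> {0..1} \<Longrightarrow> \<bar>e\<^sup>2 * U'' x - fAC (U x)\<bar> \<le> b"
      "\<And>x. x \<in> {0..1} \<Longrightarrow> \<bar>e\<^sup>2 * w'' x - fAC' (U x) * w x\<bar> \<le> c"
    and t: "0 < t"
  shows "ip w (Lop e (\<lambda>x. U x + v x)) \<le> a * b + c / 2
    + (c / 2 + 6 * a + a * t / 2) * integral {0..1} (\<lambda>x. (v x)\<^sup>2) + a / (2 * t) * integral {0..1} (\<lambda>x. v x ^ 4)"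
proof -
  define G where "G x = a * b + c * ((1 + (v x)\<^sup>2) / 2) + a * (6 * (v x)\<^sup>2)
    + a * ((t * (v x)\<^sup>2 + v x ^ 4 / t) / 2)" for x
  have "continuous_on {0..1} v"
    using regular_neumannD(1)[OF v] by (meson DERIV_isCont continuous_at_imp_continuous_on)
  then have "(\<lambda>x. (v x)\<^sup>2) integrable_on {0..1}" "(\<lambda>x. v x ^ 4) integrable_on {0..1}"
    by (auto intro!: integrable_continuous_interval continuous_on_power)
  moreover define K where "K = a * b + c / 2"
  moreover have "((\<lambda>x::real. K) has_integral K) {0..1}"
    using has_integral_const_real[of K 0 1] by simp
  ultimately have "((\<lambda>x. K + (c / 2 + 6 * a + a * t / 2) * (v x)\<^sup>2 + a / (2 * t) * v x ^ 4) has_integral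
      K + (c / 2 + 6 * a + a * t / 2) * integral {0..1} (\<lambda>x. (v x)\<^sup>2)
      + a / (2 * t) * integral {0..1} (\<lambda>x. v x ^ 4)) {0..1}"
    by (intro has_integral_add has_integral_mult_right integrable_integral)
  moreover have "K + (c / 2 + 6 * a + a * t / 2) * (v x)\<^sup>2 + a / (2 * t) * v x ^ 4 = G x" for x
    using t by (simp add: G_def K_def field_simps)
  ultimately have "(G has_integral K + (c / 2 + 6 * a + a * t / 2) * integral {0..1} (\<lambda>x. (v x)\<^sup>2)
      + a / (2 * t) * integral {0..1} (\<lambda>x. v x ^ 4)) {0..1}"
    by simp
  moreover have "perturbation_integrand e w w'' U U'' v x \<le> G x" if "x \<in> {0..1}" for x
    unfolding perturbation_integrand_def G_def
    by (rule perturbation_integrand_le) (use bounds that t in auto)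
  ultimately show ?thesis
    using has_integral_le[OF has_integral_perturbation_integrand[OF w' w'' neumann U' U'' cont v]]
    by (simp add: K_def)
qed

lemma uxi_i_inner_Lop_le_integrals:
  fixes \<rho> \<delta> t :: real
  assumes e: "0 < e" "e \<le> 1" and \<rho>: "0 < \<rho>" and t: "0 < t"
    and \<delta>: "\<delta> = 4 * exp (- 1 / (2 * \<rho>))" and small: "8 * real (N+1) * \<delta> \<le> e\<^sup>2"
    and h: "hcomb N \<xi> (H \<xi>) \<in> Omega e \<rho> N" and mass: "mass_map_at e N \<mu> H \<xi>"
    and v: "regular_neumann v" and i: "i \<in> {1..N}"
  defines "a \<equiv> 6 / e" and "b \<equiv> 43 * real (N+1) * \<delta> / e" and "c \<equiv> 360 * real (N+1) * \<delta> / e\<^sup>2"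
  shows "ip (uxi_i e N H \<xi> i) (Lop e (\<lambda>x. uxi e N H \<xi> x + v x)) \<le> a * b + c / 2
    + (c / 2 + 6 * a + a * t / 2) * integral {0..1} (\<lambda>x. (v x)\<^sup>2) + a / (2 * t) * integral {0..1} (\<lambda>x. v x ^ 4)"
proof -
  define h where "h = hcomb N \<xi> (H \<xi>)"
  have e0: "e \<noteq> 0"
    using e by simp
  obtain H' where H': "((\<lambda>s. H (\<xi>(i := \<xi> i + s))) has_real_derivative H') (at 0)" and "\<bar>H'\<bar> \<le> 2"
    using abs_mass_map_derivative_le_2[OF h e \<rho> \<delta> small mass i] by blast
  define w where
    "w x = layer_sign i * layer_t e (h i) x + layer_sign (N+1) * layer_t e (h (N+1)) x * H'" for x
  define w' where
    "w' x = layer_sign i * layer_tx e (h i) x + layer_sign (N+1) * layer_tx e (h (N+1)) x * H'" for x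
  define w'' where
    "w'' x = layer_sign i * layer_txx e (h i) x + layer_sign (N+1) * layer_txx e (h (N+1)) x * H'" for x
  define U where "U x = -1 + (\<Sum>j=1..N+1. layer_sign j * layer e (h j) x)" for x
  define U'' where "U'' x = (\<Sum>j=1..N+1. layer_sign j * layer_xx e (h j) x)" for x
  have "uxi_i e N H \<xi> i = w"
    using i by (auto simp: uxi_i_eq_layer_t[OF e0 i H'] w_def h_def hcomb_def)
  moreover have "uxi e N H \<xi> = U"
    by (auto simp: uxi_def uh_eq_layers[OF e0] U_def h_def)
  moreover have "ip w (Lop e (\<lambda>x. U x + v x)) \<le> a * b + c / 2
    + (c / 2 + 6 * a + a * t / 2) * integral {0..1} (\<lambda>x. (v x)\<^sup>2) + a / (2 * t) * integral {0..1} (\<lambda>x. v x ^ 4)"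
  proof (rule ip_Lop_perturbation_le[OF _ _ _ _ _ _ _ _ v _ _ _ _ t])
    show "(w has_real_derivative w' x) (at x)" for x
      unfolding w_def[abs_def] w'_def by (intro DERIV_add DERIV_cmult DERIV_cmult_right layer_t_deriv_x e0)
    show "(w' has_real_derivative w'' x) (at x)" for x
      unfolding w'_def[abs_def] w''_def by (intro DERIV_add DERIV_cmult DERIV_cmult_right layer_tx_deriv_x e0)
    show "w' 0 = 0" "w' 1 = 0"
      by (simp_all add: w'_def layer_tx_boundary)
    show "(U has_real_derivative (\<Sum>j=1..N+1. layer_sign j * layer_x e (h j) x)) (at x)" for x
      unfolding U_def[abs_def] by (rule DERIV_signed_layer_sum[OF e0])
    show "((\<lambda>x. \<Sum>j=1..N+1. layer_sign j * layer_x e (h j) x) has_real_derivative U'' x) (at x)" for x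
      unfolding U''_def by (rule DERIV_signed_layer_x_sum[OF e0])
    show "continuous_on {0..1} w''" "continuous_on {0..1} U''"
      unfolding w''_def[abs_def] U''_def[abs_def]
      by (intro continuous_intros continuous_on_layer_txx continuous_on_layer_xx e0)+
    fix x :: real
    assume x: "x \<in> {0..1}"
    show "\<bar>U x\<bar> \<le> 2" "\<bar>e\<^sup>2 * U'' x - fAC (U x)\<bar> \<le> b"
      using Omega_pointwise_estimates(1,2)[OF h[folded h_def] e \<rho> \<delta> small x]
      by (simp_all add: U_def U''_def b_def)
    show "\<bar>w x\<bar> \<le> a" "\<bar>e\<^sup>2 * w'' x - fAC' (U x) * w x\<bar> \<le> c"
      using Omega_tangent_estimates[OF h[folded h_def] e \<rho> \<delta> small x i \<open>\<bar>H'\<bar> \<le> 2\<close>]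
      by (simp_all add: w_def w''_def U_def a_def c_def)
  qed
  ultimately show ?thesis
    by simp
qed

lemma integral_square_less_of_L2norm_less:
  assumes "L2norm v < e powr a"
  shows "integral {0..1} (\<lambda>x. (v x)\<^sup>2) < e powr (2 * a)"
proof -
  have nonneg: "0 \<le> integral {0..1} (\<lambda>x. (v x)\<^sup>2)"
    by (rule integral_even_power_nonneg) simp
  then have "(sqrt (integral {0..1} (\<lambda>x. (v x)\<^sup>2)))\<^sup>2 < (e powr a)\<^sup>2"
    using assms unfolding L2norm_def by (intro power_strict_mono) auto
  then show ?thesis
    using nonneg by (cases "e = 0") (simp_all add: powr_power mult.commute)
qed

lemma integral_fourth_power_less_of_L4norm_less:
  assumes "L4norm v < e powr a"
  shows "integral {0..1} (\<lambda>x. v x ^ 4) < e powr (4 * a)"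
proof -
  have nonneg: "0 \<le> integral {0..1} (\<lambda>x. v x ^ 4)"
    by (rule integral_even_power_nonneg) simp
  then have "(integral {0..1} (\<lambda>x. v x ^ 4) powr (1/4)) ^ 4 < (e powr a) ^ 4"
    using assms unfolding L4norm_def by (intro power_strict_mono) auto
  moreover have "(integral {0..1} (\<lambda>x. v x ^ 4) powr (1/4)) ^ 4 = integral {0..1} (\<lambda>x. v x ^ 4)"
    using nonneg by (cases "integral {0..1} (\<lambda>x. v x ^ 4) = 0") (simp_all add: powr_power)
  ultimately show ?thesis
    by (cases "e = 0") (simp_all add: powr_power mult.commute)
qed

lemma perturbation_bound_arith:
  fixes e m \<kappa> b c I2 I4 :: real
  assumes e: "0 < e" "e < 1" and m: "0 < m" and \<kappa>: "0 < \<kappa>"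
    and c: "0 \<le> c" and bc: "6 / e * b + c \<le> e powr (2 + 2 * m)"
    and I2: "0 \<le> I2" "I2 < e powr (3 + 2 * m)" and I4: "0 \<le> I4" "I4 < e powr (3 + 2 * m - 4 * \<kappa>)"
  defines "a \<equiv> 6 / e" and "t \<equiv> e powr (- 2 * \<kappa>)"
  shows "a * b + c / 2 + (c / 2 + 6 * a + a * t / 2) * I2 + a / (2 * t) * I4
    \<le> 43 * e powr (2 + 2 * m - 2 * \<kappa>)"
proof -
  define F where "F = e powr (2 + 2 * m)"
  define E where "E = e powr (2 + 2 * m - 2 * \<kappa>)"
  have "F \<le> E"
    using e \<kappa> by (simp add: F_def E_def powr_mono')
  have "I2 \<le> 1"
    using I2 e m powr_le1[of "3 + 2 * m" e] by linarith
  then have "c / 2 * I2 \<le> c / 2"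
    using c by (simp add: mult_left_le)
  moreover have "6 * a * I2 \<le> 36 * F"
  proof -
    have "6 * a * I2 \<le> 36 * (e powr (3 + 2 * m) / e)"
      using I2 e by (simp add: a_def divide_right_mono)
    then show ?thesis
      using e by (simp add: F_def powr_div_self)
  qed
  moreover have "a * t / 2 * I2 \<le> 3 * E"
  proof -
    have "a * t / 2 * I2 \<le> 3 * (e powr (- 2 * \<kappa>) * e powr (3 + 2 * m) / e)"
      using I2 e by (simp add: a_def t_def divide_right_mono)
    also have "e powr (- 2 * \<kappa>) * e powr (3 + 2 * m) / e = E"
      using e by (simp add: E_def powr_div_self powr_add[symmetric] add_diff_eq)
    finally show ?thesis .
  qed
  moreover have "a / (2 * t) * I4 \<le> 3 * E"
  proof -
    have "a / (2 * t) * I4 = 3 * (I4 / e powr (- 2 * \<kappa>) / e)"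
      by (simp add: a_def t_def)
    also have "\<dots> \<le> 3 * (e powr (3 + 2 * m - 4 * \<kappa>) / e powr (- 2 * \<kappa>) / e)"
      using I4 e by (intro mult_left_mono divide_right_mono) auto
    also have "e powr (3 + 2 * m - 4 * \<kappa>) / e powr (- 2 * \<kappa>) / e = E"
      using e by (simp add: E_def powr_div_self powr_diff[symmetric] diff_add_eq add_diff_eq)
    finally show ?thesis .
  qed
  moreover have "(c / 2 + 6 * a + a * t / 2) * I2 = c / 2 * I2 + 6 * a * I2 + a * t / 2 * I2"
    by (simp add: distrib_right)
  ultimately show ?thesis
    using bc \<open>F \<le> E\<close> unfolding F_def E_def by (simp add: a_def)
qed

lemma uxi_i_inner_Lop_le:
  fixes \<rho> \<delta> :: real
  assumes e: "0 < e" "e < 1" and m: "0 < m" and \<kappa>: "0 < \<kappa>" and \<rho>: "0 < \<rho>"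
    and \<delta>: "\<delta> = 4 * exp (- 1 / (2 * \<rho>))" and small: "1000 * real (N+1) * \<delta> \<le> e powr (4 + 2 * m)"
    and h: "hcomb N \<xi> (H \<xi>) \<in> Omega e \<rho> N" and mass: "mass_map_at e N \<mu> H \<xi>"
    and v: "regular_neumann v"
    and L2: "L2norm v < e powr (3/2 + m)" and L4: "L4norm v < e powr (3/4 + m/2 - \<kappa>)"
    and i: "i \<in> {1..N}"
  shows "ip (uxi_i e N H \<xi> i) (Lop e (\<lambda>x. uxi e N H \<xi> x + v x)) \<le> 43 * e powr (2 + 2 * m - 2 * \<kappa>)"
proof -
  have "0 \<le> \<delta>"
    using \<delta> by simp
  have "e powr (4 + 2 * m) \<le> e powr 2"
    using e m by (intro powr_mono') auto
  moreover have "8 * real (N+1) * \<delta> \<le> 1000 * real (N+1) * \<delta>"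
    using \<open>0 \<le> \<delta>\<close> by (simp add: mult_right_mono)
  ultimately have small_sq: "8 * real (N+1) * \<delta> \<le> e\<^sup>2"
    using small e by (simp add: powr_realpow)
  have "6 / e * (43 * real (N+1) * \<delta> / e) + 360 * real (N+1) * \<delta> / e\<^sup>2
      = 618 * (real (N+1) * \<delta> / e\<^sup>2)"
    using e by (simp add: power2_eq_square field_simps)
  also have "\<dots> \<le> 1000 * (real (N+1) * \<delta> / e\<^sup>2)"
    using \<open>0 \<le> \<delta>\<close> by (intro mult_right_mono) auto
  also have "\<dots> = 1000 * real (N+1) * \<delta> / e\<^sup>2"
    by simp
  also have "\<dots> \<le> e powr (4 + 2 * m) / e powr 2"
    using small e by (simp add: powr_realpow divide_right_mono)
  also have "\<dots> = e powr (4 + 2 * m - 2)"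
    by (rule powr_diff[symmetric])
  finally have exponentially_small:
    "6 / e * (43 * real (N+1) * \<delta> / e) + 360 * real (N+1) * \<delta> / e\<^sup>2 \<le> e powr (2 + 2 * m)"
    by simp
  have "ip (uxi_i e N H \<xi> i) (Lop e (\<lambda>x. uxi e N H \<xi> x + v x))
    \<le> 6 / e * (43 * real (N+1) * \<delta> / e) + 360 * real (N+1) * \<delta> / e\<^sup>2 / 2
      + (360 * real (N+1) * \<delta> / e\<^sup>2 / 2 + 6 * (6 / e) + 6 / e * e powr (- 2 * \<kappa>) / 2)
        * integral {0..1} (\<lambda>x. (v x)\<^sup>2)
      + 6 / e / (2 * e powr (- 2 * \<kappa>)) * integral {0..1} (\<lambda>x. v x ^ 4)"
    using e by (intro uxi_i_inner_Lop_le_integrals[OF _ _ \<rho> _ \<delta> small_sq h mass v i]) auto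
  also have "\<dots> \<le> 43 * e powr (2 + 2 * m - 2 * \<kappa>)"
    using \<open>0 \<le> \<delta>\<close> e
      integral_square_less_of_L2norm_less[OF L2] integral_fourth_power_less_of_L4norm_less[OF L4]
    by (intro perturbation_bound_arith[OF e m \<kappa> _ exponentially_small])
      (auto intro: integral_even_power_nonneg simp: algebra_simps)
  finally show ?thesis .
qed

lemma eventually_exp_tail_less_powr:
  fixes k K M :: real
  assumes "0 < k" "0 < K"
  shows "\<forall>\<^sub>F e in at_right 0. K * exp (- 1 / (2 * e powr k)) < e powr M"
  using assms by real_asymp

theorem lemma5p12:
  fixes N :: nat and \<mu> m :: real
  assumes "N \<ge> 1" and "-1 < \<mu>" and "\<mu> < 1" and "m > 0"
  shows "\<exists>kb>0. \<forall>\<kappa>0 \<kappa>. 0 < \<kappa>0 \<and> \<kappa>0 < kb \<and> 0 < \<kappa> \<and> \<kappa> < kb \<longrightarrow>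
    (\<exists>\<epsilon>0>0. \<exists>C. \<forall>\<epsilon> \<xi> H v. 0 < \<epsilon> \<and> \<epsilon> < \<epsilon>0 \<and>
        hcomb N \<xi> (H \<xi>) \<in> Omega \<epsilon> (\<epsilon> powr \<kappa>0) N \<and>
        mass_map_at \<epsilon> N \<mu> H \<xi> \<and>
        regular_neumann v \<and>
        (\<forall>i\<in>{1..N}. ip v (uxi_i \<epsilon> N H \<xi> i) = 0) \<and>
        L2norm v < \<epsilon> powr (3/2 + m) \<and>
        L4norm v < \<epsilon> powr (3/4 + m/2 - \<kappa>)
      \<longrightarrow> (\<forall>i\<in>{1..N}.
             ip (uxi_i \<epsilon> N H \<xi> i) (Lop \<epsilon> (\<lambda>x. uxi \<epsilon> N H \<xi> x + v x))
               \<le> C * \<epsilon> powr (2 + 2*m - 2*\<kappa>)))"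
proof -
  have "\<exists>\<epsilon>0>0. \<exists>C. \<forall>\<epsilon> \<xi> H v. 0 < \<epsilon> \<and> \<epsilon> < \<epsilon>0 \<and> hcomb N \<xi> (H \<xi>) \<in> Omega \<epsilon> (\<epsilon> powr \<kappa>0) N \<and>
      mass_map_at \<epsilon> N \<mu> H \<xi> \<and> regular_neumann v \<and> (\<forall>i\<in>{1..N}. ip v (uxi_i \<epsilon> N H \<xi> i) = 0) \<and>
      L2norm v < \<epsilon> powr (3/2 + m) \<and> L4norm v < \<epsilon> powr (3/4 + m/2 - \<kappa>)
      \<longrightarrow> (\<forall>i\<in>{1..N}. ip (uxi_i \<epsilon> N H \<xi> i) (Lop \<epsilon> (\<lambda>x. uxi \<epsilon> N H \<xi> x + v x))
            \<le> C * \<epsilon> powr (2 + 2*m - 2*\<kappa>))"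
    if "0 < \<kappa>0" "0 < \<kappa>" for \<kappa>0 \<kappa> :: real
  proof -
    obtain \<epsilon>0 where "0 < \<epsilon>0" and small: "\<And>\<epsilon>. 0 < \<epsilon> \<Longrightarrow> \<epsilon> < \<epsilon>0 \<Longrightarrow>
        1000 * real (N+1) * (4 * exp (- 1 / (2 * \<epsilon> powr \<kappa>0))) < \<epsilon> powr (4 + 2 * m)"
      using eventually_exp_tail_less_powr[OF \<open>0 < \<kappa>0\<close>, of "1000 * real (N+1) * 4" "4 + 2 * m"]
      unfolding eventually_at_right_field by (auto simp: algebra_simps)
    have "ip (uxi_i \<epsilon> N H \<xi> i) (Lop \<epsilon> (\<lambda>x. uxi \<epsilon> N H \<xi> x + v x)) \<le> 43 * \<epsilon> powr (2 + 2*m - 2*\<kappa>)"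
      if "0 < \<epsilon>" "\<epsilon> < min \<epsilon>0 1" "hcomb N \<xi> (H \<xi>) \<in> Omega \<epsilon> (\<epsilon> powr \<kappa>0) N"
        "mass_map_at \<epsilon> N \<mu> H \<xi>" "regular_neumann v" "L2norm v < \<epsilon> powr (3/2 + m)"
        "L4norm v < \<epsilon> powr (3/4 + m/2 - \<kappa>)" "i \<in> {1..N}" for \<epsilon> \<xi> H v i
      using that small[of \<epsilon>] \<open>0 < \<kappa>\<close> \<open>m > 0\<close>
      by (intro uxi_i_inner_Lop_le[where \<rho> = "\<epsilon> powr \<kappa>0" and \<delta> = "4 * exp (- 1 / (2 * \<epsilon> powr \<kappa>0))"])
        (auto intro: less_imp_le)
    then show ?thesis
      using \<open>0 < \<epsilon>0\<close> by (intro exI[of _ "min \<epsilon>0 1"] conjI exI[of _ 43]) auto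
  qed
  then show ?thesis
    by (intro exI[of _ 1]) auto
qed

end
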